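(* Let $N,M$ be integers with $0<M<N/2$. Let $\mathbf{Str}_{00}$ (resp. $\mathbf{Str}_{11}$) be the sub-poset of $\mathbf{Str}(N,M)$ of strings $s$ with $s_1=s_N=0$ (resp. $s_1=s_N=1$), and let $\overline{\mathbf{Str}}_{00}$ (resp. $\overline{\mathbf{Str}}_{11}$) be the sub-poset of strings with $(s_1,s_N)\in\{(0,0),(0,X),(X,0)\}$ (resp. $(s_1,s_N)\in\{(1,1),(1,X),(X,1)\}$). Then the geometric realizations of $\mathbf{Str}_{00}$, $\overline{\mathbf{Str}}_{00}$, $\mathbf{Str}_{11}$ and $\overline{\mathbf{Str}}_{11}$ are contractible.
   Context: A circular symbol string of length $N$ is $s=s_1\cdots s_N$ with each $s_i\in\{0,1,X\}$, indices read cyclically modulo $N$; $0,1$ are called bits. A block of $s$ is a maximal cyclic run of consecutive equal symbols. $s$ is a circular cellular string of rank $M$ if it has exactly $M$ blocks of symbol $0$, exactly $M$ blocks of symbol $1$, and every block of symbol $X$ is cyclically preceded and followed by blocks of different bits (one of symbol $0$ and one of symbol $1$). $\mathbf{Str}(N,M)$ is the set of such strings, partially ordered by $s'<s$ iff $s$ is obtained from $s'$ by replacing some (at least one) of the bits of $s'$ by $X$. The geometric realization of a poset is that of its order complex. *)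

theory Defs
  imports "HOL-Analysis.Analysis"
begin

datatype sym = Z0 | O1 | X

text \<open>Circular strings of length N are lists of length N; paper index s_i is list index i-1.
  Cyclic neighbours are taken modulo N.\<close>

definition is_bit :: "sym \<Rightarrow> bool" where
  "is_bit c \<longleftrightarrow> c \<noteq> X"

text \<open>Number of maximal cyclic runs (blocks) of symbol c in s: the number of positions where
  a block of c starts (cyclic predecessor differs), plus one if s is constantly c
  (then the whole cycle is a single block).\<close>
definition num_blocks :: "sym list \<Rightarrow> sym \<Rightarrow> nat" where
  "num_blocks s c = card {i. i < length s \<and> s ! i = c \<and>
       s ! ((i + length s - 1) mod length s) \<noteq> c}
     + (if 0 < length s \<and> (\<forall>i<length s. s ! i = c) then 1 else 0)"

text \<open>Every X-block is cyclically preceded and followed by blocks of different bits: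
  whenever position i holds a bit, positions i+1..i+d (d \<ge> 1) hold X and position i+d+1
  holds a bit (all mod N), the two bits differ.\<close>
definition X_blocks_ok :: "sym list \<Rightarrow> bool" where
  "X_blocks_ok s \<longleftrightarrow> (let N = length s in
     \<forall>i<N. \<forall>d\<ge>1. s ! i \<noteq> X \<longrightarrow> (\<forall>k\<in>{1..d}. s ! ((i + k) mod N) = X)
        \<longrightarrow> s ! ((i + d + 1) mod N) \<noteq> X \<longrightarrow> s ! i \<noteq> s ! ((i + d + 1) mod N))"

definition Str :: "nat \<Rightarrow> nat \<Rightarrow> sym list set" where
  "Str N M = {s. length s = N \<and> num_blocks s Z0 = M \<and> num_blocks s O1 = M \<and> X_blocks_ok s}"

definition str_less :: "sym list \<Rightarrow> sym list \<Rightarrow> bool" where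
  "str_less s' s \<longleftrightarrow> length s' = length s \<and> s' \<noteq> s \<and>
     (\<forall>i<length s. s ! i = s' ! i \<or> (s ! i = X \<and> s' ! i \<noteq> X))"

text \<open>Geometric realization of the order complex of a finite poset (P, lt): the set of
  formal convex combinations of elements of P whose support is a chain, as a subspace of
  'a \<Rightarrow> real (product topology; on finitely supported points this is the Euclidean topology).\<close>
definition order_complex_realization :: "'a set \<Rightarrow> ('a \<Rightarrow> 'a \<Rightarrow> bool) \<Rightarrow> ('a \<Rightarrow> real) set" where
  "order_complex_realization P lt =
     {f. (\<forall>x. 0 \<le> f x) \<and> (\<forall>x. f x \<noteq> 0 \<longrightarrow> x \<in> P) \<and> sum f P = 1 \<and>
         (\<forall>x y. f x \<noteq> 0 \<longrightarrow> f y \<noteq> 0 \<longrightarrow> x = y \<or> lt x y \<or> lt y x)}"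

definition Str00 :: "nat \<Rightarrow> nat \<Rightarrow> sym list set" where
  "Str00 N M = {s \<in> Str N M. s ! 0 = Z0 \<and> s ! (N - 1) = Z0}"
definition Str11 :: "nat \<Rightarrow> nat \<Rightarrow> sym list set" where
  "Str11 N M = {s \<in> Str N M. s ! 0 = O1 \<and> s ! (N - 1) = O1}"
definition Str00bar :: "nat \<Rightarrow> nat \<Rightarrow> sym list set" where
  "Str00bar N M = {s \<in> Str N M. (s ! 0, s ! (N - 1)) \<in> {(Z0, Z0), (Z0, X), (X, Z0)}}"
definition Str11bar :: "nat \<Rightarrow> nat \<Rightarrow> sym list set" where
  "Str11bar N M = {s \<in> Str N M. (s ! 0, s ! (N - 1)) \<in> {(O1, O1), (O1, X), (X, O1)}}"

end

theory Submission
  imports Defs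
begin

text \<open>A monotone self-map f of a finite poset acts on the realization of its order complex by
  pushing weights forward, and if f \<le> g pointwise, the induced maps are homotopic. It therefore
  suffices to join the identity to a constant map by a zigzag of pointwise comparable monotone maps.

  Let b be the bit at both ends, b' the other bit, and a_0 a_1 a_2 ... = b b' b ... the alternating
  word. If a string t begins with a_0 ... a_(k-1), let r \<ge> k be the first position carrying a_k;
  the letters at positions k, ..., r - 1 are a_(k-1) or X. Overwriting them all by X, or all by
  a_k, gives monotone maps E_k \<ge> id and C_k \<le> E_k that preserve the block counts, and C_k t
  begins with a_0 ... a_k. After 2M steps all M blocks of b' are used up, so every string has
  become b b' ... b b' b ... b. For the barred posets one first applies the retraction that
  replaces an X at an end by b.\<close>

section \<open>Homotopies between monotone maps of order complexes\<close>

definition pushforward :: "'a set \<Rightarrow> ('a \<Rightarrow> 'a) \<Rightarrow> ('a \<Rightarrow> real) \<Rightarrow> 'a \<Rightarrow> real" where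
  "pushforward P f p = (\<lambda>y. \<Sum>x\<in>{x\<in>P. f x = y}. p x)"

definition mass_below :: "'a set \<Rightarrow> ('a \<Rightarrow> 'a \<Rightarrow> bool) \<Rightarrow> ('a \<Rightarrow> real) \<Rightarrow> 'a \<Rightarrow> real" where
  "mass_below P lt p x = (\<Sum>z\<in>{z\<in>P. lt z x}. p z)"

text \<open>Stacking the weights of a point of the realization along its chain, the weight of \<open>x\<close>
  fills the interval from \<open>mass_below P lt p x\<close> to \<open>mass_below P lt p x + p x\<close>; \<open>lower_part\<close>
  is the portion of it below level \<open>t\<close>. The homotopy from \<open>g\<close> to \<open>f\<close> pushes the mass below
  level \<open>t\<close> along \<open>f\<close> and the rest along \<open>g\<close>.\<close>

definition lower_part :: "'a set \<Rightarrow> ('a \<Rightarrow> 'a \<Rightarrow> bool) \<Rightarrow> real \<Rightarrow> ('a \<Rightarrow> real) \<Rightarrow> 'a \<Rightarrow> real" where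
  "lower_part P lt t p x = min (p x) (max 0 (t - mass_below P lt p x))"

definition monotone_homotopy ::
    "'a set \<Rightarrow> ('a \<Rightarrow> 'a \<Rightarrow> bool) \<Rightarrow> ('a \<Rightarrow> 'a) \<Rightarrow> ('a \<Rightarrow> 'a) \<Rightarrow> real \<times> ('a \<Rightarrow> real) \<Rightarrow> 'a \<Rightarrow> real" where
  "monotone_homotopy P lt f g z = (\<lambda>y.
     pushforward P f (lower_part P lt (fst z) (snd z)) y
     + pushforward P g (\<lambda>x. snd z x - lower_part P lt (fst z) (snd z) x) y)"

lemma pushforward_nonzero_imp_witness:
  assumes "pushforward P f p y \<noteq> 0"
  obtains x where "x \<in> P" "f x = y" "p x \<noteq> 0"
  using assms unfolding pushforward_def by (metis (mono_tags, lifting) mem_Collect_eq sum.neutral)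

lemma pushforward_nonneg: "(\<And>x. 0 \<le> p x) \<Longrightarrow> 0 \<le> pushforward P f p y"
  unfolding pushforward_def by (simp add: sum_nonneg)

lemma sum_pushforward:
  assumes "finite P" "f ` P \<subseteq> P"
  shows "sum (pushforward P f p) P = sum p P"
  using sum.group[OF assms(1) assms(1) assms(2), of p] by (simp add: pushforward_def eq_commute)

lemma continuous_on_coordinate_snd: "continuous_on S (\<lambda>z::real \<times> ('a \<Rightarrow> real). snd z x)"
  by (rule continuous_on_compose2[OF continuous_on_product_coordinates continuous_on_snd[OF
    continuous_on_id]])
    simp

lemma continuous_on_lower_part:
  "continuous_on S (\<lambda>z::real \<times> ('a \<Rightarrow> real). lower_part P lt (fst z) (snd z) x)"
  unfolding lower_part_def mass_below_def by (intro continuous_intros continuous_on_coordinate_snd)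

lemma continuous_on_monotone_homotopy: "continuous_on S (monotone_homotopy P lt f g)"
proof (rule continuous_on_coordinatewise_then_product)
  fix y
  show "continuous_on S (\<lambda>z. monotone_homotopy P lt f g z y)"
    unfolding monotone_homotopy_def pushforward_def
    by (intro continuous_intros continuous_on_lower_part continuous_on_coordinate_snd)
qed

locale finite_strict_poset =
  fixes P :: "'a set" and lt :: "'a \<Rightarrow> 'a \<Rightarrow> bool"
  assumes finite_P: "finite P" and irrefl: "\<And>x. \<not> lt x x"
    and trans: "\<And>x y z. lt x y \<Longrightarrow> lt y z \<Longrightarrow> lt x z"
begin

abbreviation realization :: "('a \<Rightarrow> real) set" where
  "realization \<equiv> order_complex_realization P lt"

definition le :: "'a \<Rightarrow> 'a \<Rightarrow> bool" where
  "le x y \<longleftrightarrow> x = y \<or> lt x y"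

definition comparable :: "'a \<Rightarrow> 'a \<Rightarrow> bool" where
  "comparable x y \<longleftrightarrow> le x y \<or> le y x"

lemma le_trans: "le x y \<Longrightarrow> le y z \<Longrightarrow> le x z"
  unfolding le_def using trans by blast

lemma comparable_iff: "comparable x y \<longleftrightarrow> x = y \<or> lt x y \<or> lt y x"
  unfolding comparable_def le_def by blast

lemma realization_iff: "p \<in> realization \<longleftrightarrow> (\<forall>x. 0 \<le> p x) \<and> (\<forall>x. p x \<noteq> 0 \<longrightarrow> x \<in> P)
    \<and> sum p P = 1 \<and> (\<forall>x y. p x \<noteq> 0 \<longrightarrow> p y \<noteq> 0 \<longrightarrow> comparable x y)"
  unfolding order_complex_realization_def comparable_iff by simp

lemma realizationD:
  assumes "p \<in> realization"
  shows "0 \<le> p x" "p x \<noteq> 0 \<Longrightarrow> x \<in> P" "sum p P = 1"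
    "p x \<noteq> 0 \<Longrightarrow> p y \<noteq> 0 \<Longrightarrow> comparable x y"
  using assms unfolding realization_iff by auto

lemma comparable_image:
  assumes "monotone_on P le le f" "x \<in> P" "y \<in> P" "comparable x y"
  shows "comparable (f x) (f y)"
  using assms unfolding comparable_def monotone_on_def by blast

lemma mass_below_nonneg: "p \<in> realization \<Longrightarrow> 0 \<le> mass_below P lt p x"
  unfolding mass_below_def by (intro sum_nonneg) (use realizationD(1) in auto)

lemma mass_below_insert: "mass_below P lt p x + p x = sum p (insert x {z\<in>P. lt z x})"
  unfolding mass_below_def using finite_P irrefl by (subst sum.insert) auto

lemma mass_below_add_le_one:
  assumes "p \<in> realization" "x \<in> P"
  shows "mass_below P lt p x + p x \<le> 1"
proof -
  have "mass_below P lt p x + p x \<le> sum p P"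
    unfolding mass_below_insert using assms finite_P realizationD(1)[OF assms(1)]
    by (intro sum_mono2) auto
  then show ?thesis using realizationD(3)[OF assms(1)] by simp
qed

lemma mass_below_add_le_mass_below:
  assumes "p \<in> realization" "y \<in> P" "lt y x"
  shows "mass_below P lt p y + p y \<le> mass_below P lt p x"
  unfolding mass_below_insert mass_below_def[of P lt p x]
  using assms finite_P trans realizationD(1)[OF assms(1)] by (intro sum_mono2) auto

context
  fixes t :: real and p :: "'a \<Rightarrow> real"
  assumes p: "p \<in> realization"
begin

lemma lower_part_bounds: "0 \<le> lower_part P lt t p x" "lower_part P lt t p x \<le> p x"
  using realizationD(1)[OF p, of x] unfolding lower_part_def by auto

lemma lower_part_nonzero:
  "lower_part P lt t p x \<noteq> 0 \<Longrightarrow> mass_below P lt p x < t \<and> p x \<noteq> 0"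
  using realizationD(1)[OF p, of x] unfolding lower_part_def
    by (auto simp: min_def max_def split: if_splits)

lemma upper_part_nonzero:
  "p x - lower_part P lt t p x \<noteq> 0 \<Longrightarrow> t < mass_below P lt p x + p x \<and> p x \<noteq> 0"
  using realizationD(1)[OF p, of x] unfolding lower_part_def
    by (auto simp: min_def max_def split: if_splits)

lemma lower_part_le_upper_part:
  assumes "x \<in> P" "y \<in> P" "lower_part P lt t p x \<noteq> 0" "p y - lower_part P lt t p y \<noteq> 0"
  shows "le x y"
proof -
  note x = lower_part_nonzero[OF assms(3)] and y = upper_part_nonzero[OF assms(4)]
  have "\<not> lt y x"
    using mass_below_add_le_mass_below[OF p assms(2)] x y by fastforce
  then show ?thesis
    using realizationD(4)[OF p] x y unfolding comparable_iff le_def by blast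
qed

lemma monotone_homotopy_in_realization:
  assumes f: "f ` P \<subseteq> P" "monotone_on P le le f" and g: "g ` P \<subseteq> P" "monotone_on P le le g"
    and f_le_g: "\<And>x. x \<in> P \<Longrightarrow> le (f x) (g x)"
  shows "monotone_homotopy P lt f g (t, p) \<in> realization"
proof -
  let ?L = "lower_part P lt t p" and ?U = "\<lambda>x. p x - lower_part P lt t p x"
  have h: "monotone_homotopy P lt f g (t, p) = (\<lambda>y. pushforward P f ?L y + pushforward P g ?U y)"
    by (simp add: monotone_homotopy_def)
  have witness: "(\<exists>x\<in>P. f x = y \<and> ?L x \<noteq> 0) \<or> (\<exists>x\<in>P. g x = y \<and> ?U x \<noteq> 0)"
    if "pushforward P f ?L y + pushforward P g ?U y \<noteq> 0" for y
    using that pushforward_nonzero_imp_witness[of P f ?L y] pushforward_nonzero_imp_witness[of P g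
      ?U y]
    by force
  have chain: "comparable y y'"
    if "pushforward P f ?L y + pushforward P g ?U y \<noteq> 0"
      "pushforward P f ?L y' + pushforward P g ?U y' \<noteq> 0" for y y'
    using witness[OF that(1)] witness[OF that(2)]
  proof (elim disjE bexE conjE)
    fix x x' assume "x \<in> P" "f x = y" "?L x \<noteq> 0" "x' \<in> P" "f x' = y'" "?L x' \<noteq> 0"
    then show ?thesis
      using comparable_image[OF f(2)] realizationD(4)[OF p] lower_part_nonzero by metis
  next
    fix x x' assume "x \<in> P" "g x = y" "?U x \<noteq> 0" "x' \<in> P" "g x' = y'" "?U x' \<noteq> 0"
    then show ?thesis
      using comparable_image[OF g(2)] realizationD(4)[OF p] upper_part_nonzero by metis
  next
    fix x x' assume "x \<in> P" "f x = y" "?L x \<noteq> 0" "x' \<in> P" "g x' = y'" "?U x' \<noteq> 0"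
    then have "le (f x) (f x')"
      using lower_part_le_upper_part f(2) by (auto simp: monotone_on_def)
    then show ?thesis
      using le_trans f_le_g \<open>x' \<in> P\<close> \<open>f x = y\<close> \<open>g x' = y'\<close> unfolding comparable_def by blast
  next
    fix x x' assume "x \<in> P" "g x = y" "?U x \<noteq> 0" "x' \<in> P" "f x' = y'" "?L x' \<noteq> 0"
    then have "le (f x') (f x)"
      using lower_part_le_upper_part f(2) by (auto simp: monotone_on_def)
    then show ?thesis
      using le_trans f_le_g \<open>x \<in> P\<close> \<open>g x = y\<close> \<open>f x' = y'\<close> unfolding comparable_def by blast
  qed
  have "sum (\<lambda>y. pushforward P f ?L y + pushforward P g ?U y) P = sum p P"
    by (simp add: sum.distrib sum_pushforward[OF finite_P f(1)] sum_pushforward[OF finite_P g(1)]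
        sum_subtractf)
  moreover have "x \<in> P" if "pushforward P f ?L x + pushforward P g ?U x \<noteq> 0" for x
    using witness[OF that] f(1) g(1) by blast
  ultimately show ?thesis
    unfolding h realization_iff using realizationD(3)[OF p] chain lower_part_bounds
    by (auto intro!: add_nonneg_nonneg pushforward_nonneg)
qed

lemma monotone_homotopy_0: "monotone_homotopy P lt f g (0, p) = pushforward P g p"
proof -
  have "lower_part P lt 0 p x = 0" for x
    using mass_below_nonneg[OF p, of x] realizationD(1)[OF p, of x] unfolding lower_part_def by auto
  then show ?thesis unfolding monotone_homotopy_def pushforward_def by simp
qed

lemma monotone_homotopy_1: "monotone_homotopy P lt f g (1, p) = pushforward P f p"
proof -
  have "lower_part P lt 1 p x = p x" if "x \<in> P" for x
    using mass_below_add_le_one[OF p that] realizationD(1)[OF p, of x] unfolding lower_part_def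
      by auto
  then show ?thesis unfolding monotone_homotopy_def pushforward_def by (auto intro!: sum.cong ext)
qed

end

abbreviation pushforward_homotopic :: "('a \<Rightarrow> 'a) \<Rightarrow> ('a \<Rightarrow> 'a) \<Rightarrow> bool" where
  "pushforward_homotopic f g \<equiv>
     homotopic_with_canon (\<lambda>_. True) realization realization (pushforward P f) (pushforward P g)"

lemma pushforward_homotopic_if_le:
  assumes "f ` P \<subseteq> P" "monotone_on P le le f" "g ` P \<subseteq> P" "monotone_on P le le g"
    and "\<And>x. x \<in> P \<Longrightarrow> le (f x) (g x)"
  shows "pushforward_homotopic g f"
proof (subst homotopic_with, simp, intro exI conjI ballI)
  show "continuous_map (prod_topology (top_of_set {0..1}) (top_of_set realization))
      (top_of_set realization) (monotone_homotopy P lt f g)"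
    using monotone_homotopy_in_realization[OF _ assms]
      by (auto simp: continuous_on_monotone_homotopy)
qed (auto simp: monotone_homotopy_0 monotone_homotopy_1)

lemma pushforward_id: "p \<in> realization \<Longrightarrow> pushforward P id p = p"
proof
  fix y
  assume p: "p \<in> realization"
  show "pushforward P id p y = p y"
  proof (cases "y \<in> P")
    case True
    then have "{x \<in> P. id x = y} = {y}" by auto
    then show ?thesis unfolding pushforward_def by simp
  next
    case False
    then have "{x \<in> P. id x = y} = {}" "p y = 0" using realizationD(2)[OF p, of y] by auto
    then show ?thesis unfolding pushforward_def by (simp only: sum.empty)
  qed
qed

lemma pushforward_const:
  assumes "\<And>x. x \<in> P \<Longrightarrow> h x = c" "p \<in> realization"
  shows "pushforward P h p = (\<lambda>y. if y = c then 1 else 0)"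
proof
  fix y
  have "{x \<in> P. h x = y} = (if y = c then P else {})" using assms(1) by auto
  then show "pushforward P h p y = (if y = c then 1 else 0)"
    unfolding pushforward_def using realizationD(3)[OF assms(2)] by simp
qed

lemma contractible_if_pushforward_homotopic_const:
  assumes "pushforward_homotopic id h" and "\<And>x. x \<in> P \<Longrightarrow> h x = c"
  shows "contractible realization"
  unfolding contractible_def
proof (intro exI)
  let ?a = "(\<lambda>y. if y = c then 1 else 0) :: 'a \<Rightarrow> real"
  have "homotopic_with_canon (\<lambda>_. True) realization realization id (pushforward P id)"
    by (rule homotopic_with_equal) (auto simp: pushforward_id)
  moreover have "homotopic_with_canon (\<lambda>_. True) realization realization (pushforward P h) (\<lambda>_. ?a)"
    using homotopic_with_imp_continuous_maps[OF assms(1)]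
    by (intro homotopic_with_equal) (auto simp: pushforward_const[OF assms(2)])
  ultimately show "homotopic_with_canon (\<lambda>_. True) realization realization id (\<lambda>_. ?a)"
    using assms(1) homotopic_with_trans by blast
qed

end

section \<open>Symbols, the string order and block starts\<close>

fun flip :: "sym \<Rightarrow> sym" where
  "flip Z0 = O1" | "flip O1 = Z0" | "flip X = X"

lemma flip_flip[simp]: "flip (flip c) = c" by (cases c) auto
lemma X_eq_flip_iff[simp]: "X = flip c \<longleftrightarrow> c = X" by (cases c) auto
lemma flip_neq: "c \<noteq> X \<Longrightarrow> flip c \<noteq> c" by (cases c) auto
lemma flip_eq_self_iff[simp]: "flip c = c \<longleftrightarrow> c = X" by (cases c) auto
lemma self_eq_flip_iff[simp]: "c = flip c \<longleftrightarrow> c = X" by (cases c) auto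
lemma flip_eq_X_iff[simp]: "flip c = X \<longleftrightarrow> c = X" by (cases c) auto
lemma bit_eq_flip: "c \<noteq> X \<Longrightarrow> d \<noteq> X \<Longrightarrow> d \<noteq> c \<Longrightarrow> d = flip c"
  by (cases c; cases d) auto
lemma bit_eq_if_neq_flip: "c \<noteq> X \<Longrightarrow> d \<noteq> X \<Longrightarrow> d \<noteq> flip c \<Longrightarrow> d = c"
  by (cases c; cases d) auto

definition str_le :: "sym list \<Rightarrow> sym list \<Rightarrow> bool" where
  "str_le s' s \<longleftrightarrow> length s' = length s \<and> (\<forall>i<length s. s ! i = s' ! i \<or> (s ! i = X \<and> s' ! i \<noteq> X))"

lemma str_le_refl[simp]: "str_le s s" by (simp add: str_le_def)

lemma str_le_nth: "str_le s' s \<Longrightarrow> i < length s \<Longrightarrow> s ! i = s' ! i \<or> (s ! i = X \<and> s' ! i \<noteq> X)"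
  unfolding str_le_def by blast

lemma str_le_bit: "str_le s' s \<Longrightarrow> i < length s \<Longrightarrow> s ! i \<noteq> X \<Longrightarrow> s' ! i = s ! i"
  using str_le_nth[of s' s i] by auto

lemma str_less_imp_str_le: "str_less s' s \<Longrightarrow> str_le s' s"
  unfolding str_less_def str_le_def by auto

lemma str_le_iff_eq_or_less: "str_le s' s \<longleftrightarrow> s' = s \<or> str_less s' s"
  unfolding str_less_def str_le_def by auto

lemma str_le_antisym: assumes "str_le a b" "str_le b a" shows "a = b"
proof (rule nth_equalityI)
  show "length a = length b" using assms(1) by (simp add: str_le_def)
  fix i assume "i < length a"
  then have "i < length b" using assms(1) by (simp add: str_le_def)
  then show "a ! i = b ! i"
    using str_le_nth[OF assms(1)] str_le_nth[OF assms(2)] \<open>i < length a\<close> by force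
qed

lemma str_le_trans: assumes "str_le a b" "str_le b c" shows "str_le a c"
  unfolding str_le_def
proof (intro conjI allI impI)
  show "length a = length c" using assms by (simp add: str_le_def)
  fix i assume i: "i < length c"
  then have "i < length b" using assms by (simp add: str_le_def)
  then show "c ! i = a ! i \<or> c ! i = X \<and> a ! i \<noteq> X"
    using str_le_nth[OF assms(1), of i] str_le_nth[OF assms(2), of i] i by force
qed

lemma str_less_irrefl: "\<not> str_less x x" by (simp add: str_less_def)

lemma str_less_trans: assumes "str_less x y" "str_less y z" shows "str_less x z"
proof -
  have p: "str_le x y" "str_le y z" using assms by (auto intro: str_less_imp_str_le)
  then have "str_le x z" by (rule str_le_trans)
  moreover have "x \<noteq> z"
  proof
    assume "x = z"
    then have "x = y" using p str_le_antisym by blast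
    then show False using assms(1) by (simp add: str_less_def)
  qed
  ultimately show ?thesis unfolding str_less_def str_le_def by auto
qed

definition lin_X_blocks_ok :: "sym list \<Rightarrow> bool" where
  "lin_X_blocks_ok s \<longleftrightarrow> (\<forall>i j. i + 1 < j \<and> j < length s \<and> s ! i \<noteq> X \<and> s ! j \<noteq> X \<and>
      (\<forall>l. i < l \<and> l < j \<longrightarrow> s ! l = X) \<longrightarrow> s ! i \<noteq> s ! j)"

lemma lin_X_blocks_okD: "lin_X_blocks_ok s \<Longrightarrow> i + 1 < j \<Longrightarrow> j < length s \<Longrightarrow> s ! i \<noteq> X \<Longrightarrow> s ! j \<noteq> X \<Longrightarrow>
      (\<And>l. i < l \<Longrightarrow> l < j \<Longrightarrow> s ! l = X) \<Longrightarrow> s ! i \<noteq> s ! j"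
  unfolding lin_X_blocks_ok_def by blast

lemma X_blocks_okD:
  assumes "X_blocks_ok s" "i < length s" "1 \<le> d" "s ! i \<noteq> X"
    "\<forall>k\<in>{1..d}. s ! ((i + k) mod length s) = X" "s ! ((i + d + 1) mod length s) \<noteq> X"
  shows "s ! i \<noteq> s ! ((i + d + 1) mod length s)"
  using assms unfolding X_blocks_ok_def Let_def by blast

lemma X_blocks_ok_imp_lin:
  assumes "X_blocks_ok s" "i + 1 < j" "j < length s" "s ! i \<noteq> X" "s ! j \<noteq> X"
    "\<And>l. i < l \<Longrightarrow> l < j \<Longrightarrow> s ! l = X"
  shows "s ! i \<noteq> s ! j"
proof -
  let ?N = "length s" and ?d = "j - i - 1"
  have "i < ?N" "?d \<ge> 1" using assms by auto
  moreover have "\<forall>k\<in>{1..?d}. s ! ((i + k) mod ?N) = X"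
    using assms(2,3,6) by auto
  moreover have "(i + ?d + 1) mod ?N = j" using assms(2,3) by auto
  ultimately show ?thesis using X_blocks_okD[OF assms(1), of i ?d] assms(4,5) by simp
qed

lemma X_blocks_ok_wrap_last:
  assumes "X_blocks_ok s" "0 < j" "j < length s" "s ! (length s - 1) \<noteq> X" "s ! j \<noteq> X"
    "\<And>l. l < j \<Longrightarrow> s ! l = X"
  shows "s ! (length s - 1) \<noteq> s ! j"
proof -
  let ?N = "length s" 
  have N: "?N - 1 < ?N" using assms by auto
  moreover have "\<forall>k\<in>{1..j}. s ! ((?N - 1 + k) mod ?N) = X"
  proof
    fix k assume k: "k \<in> {1..j}"
    then have e: "?N - 1 + k = (k - 1) + ?N" using assms(3) by auto
    have kj: "k \<le> j" "j < ?N" using k assms(3) by auto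
    have "(?N - 1 + k) mod ?N = k - 1"
      by (simp only: e mod_add_self2) (rule mod_less, use kj in linarith)
    then show "s ! ((?N - 1 + k) mod ?N) = X" using assms(6) k by auto
  qed
  moreover have "(?N - 1 + j + 1) mod ?N = j" using assms(2,3) by simp
  moreover have "1 \<le> j" using assms(2) by simp
  ultimately show ?thesis using X_blocks_okD[OF assms(1), of "?N - 1" j] assms(4,5) by simp
qed

lemma X_blocks_ok_wrap_first:
  assumes "X_blocks_ok s" "i + 1 < length s" "s ! i \<noteq> X" "s ! 0 \<noteq> X"
    "\<And>l. i < l \<Longrightarrow> l < length s \<Longrightarrow> s ! l = X"
  shows "s ! i \<noteq> s ! 0"
proof -
  let ?N = "length s" and ?d = "length s - 1 - i"
  have "i < ?N" "?d \<ge> 1" using assms by auto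
  moreover have "\<forall>k\<in>{1..?d}. s ! ((i + k) mod ?N) = X"
    using assms(2,5) by auto
  moreover have e2: "i + ?d + 1 = ?N" using assms(2) by simp
  have "(i + ?d + 1) mod ?N = 0" by (simp only: e2 mod_self)
  ultimately show ?thesis using X_blocks_okD[OF assms(1), of i ?d] assms(3,4) by simp
qed

lemma lin_imp_X_blocks_ok:
  assumes "lin_X_blocks_ok s" "0 < length s" "s ! 0 \<noteq> X" "s ! (length s - 1) \<noteq> X"
  shows "X_blocks_ok s"
  unfolding X_blocks_ok_def Let_def
proof (intro allI impI)
  fix i d
  let ?N = "length s"
  assume i: "i < ?N" and d: "1 \<le> d" and si: "s ! i \<noteq> X"
    and xs: "\<forall>k\<in>{1..d}. s ! ((i + k) mod ?N) = X" and sj: "s ! ((i + d + 1) mod ?N) \<noteq> X"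
  have lt: "i + d < ?N - 1"
  proof (rule ccontr)
    assume "\<not> ?thesis"
    show False
    proof (cases "i = ?N - 1")
      case True
      then have e3: "i + 1 = ?N" using i by simp
      have "(i + 1) mod ?N = 0" by (simp only: e3 mod_self)
      moreover have "(1::nat) \<in> {1..d}" using d by simp
      ultimately show False using xs assms(3) by force
    next
      case False
      then have k: "?N - 1 - i \<in> {1..d}" using i \<open>\<not> i + d < ?N - 1\<close> by auto
      have "(i + (?N - 1 - i)) mod ?N = ?N - 1" using i False by auto
      then show False using xs k assms(4) by force
    qed
  qed
  have m: "(i + k) mod ?N = i + k" if "k \<le> d + 1" for k using lt that by auto
  show "s ! i \<noteq> s ! ((i + d + 1) mod ?N)"
    unfolding m[of "d+1", simplified add.assoc[symmetric], OF order_refl]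
  proof (rule lin_X_blocks_okD[OF assms(1)])
    show "i + 1 < i + d + 1" using d by simp
    show "i + d + 1 < ?N" using lt by simp
    show "s ! i \<noteq> X" by fact
    show "s ! (i + d + 1) \<noteq> X" using sj m[of "d+1"] by (simp add: add.assoc)
    fix l assume "i < l" "l < i + d + 1"
    then have "l - i \<in> {1..d}" by auto
    moreover have "i + (l - i) = l" using \<open>i < l\<close> by simp
    moreover have "l - i \<le> d + 1" using \<open>l < i + d + 1\<close> by simp
    ultimately show "s ! l = X" using xs m[of "l - i"] by force
  qed
qed

lemma X_blocks_ok_iff_lin:
  assumes "0 < length s" "s ! 0 \<noteq> X" "s ! (length s - 1) \<noteq> X"
  shows "X_blocks_ok s \<longleftrightarrow> lin_X_blocks_ok s"
  using lin_imp_X_blocks_ok[OF _ assms] X_blocks_ok_imp_lin unfolding lin_X_blocks_ok_def by blast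

definition block_starts :: "sym list \<Rightarrow> sym \<Rightarrow> nat set" where
  "block_starts s c = {i. 0 < i \<and> i < length s \<and> s ! i = c \<and> s ! (i - 1) \<noteq> c}"

lemma finite_block_starts[simp]: "finite (block_starts s c)" unfolding block_starts_def by auto

definition cyclic_block_starts :: "sym list \<Rightarrow> sym \<Rightarrow> nat set" where
  "cyclic_block_starts s c = {i. i < length s \<and> s ! i = c
    \<and> s ! ((i + length s - 1) mod length s) \<noteq> c}"

lemma num_blocks_eq_card:
  "(\<exists>i<length s. s ! i \<noteq> c) \<Longrightarrow> num_blocks s c = card (cyclic_block_starts s c)"
  unfolding num_blocks_def cyclic_block_starts_def by auto

lemma mod_pred: assumes "0 < i" "i < N" shows "(i + N - Suc 0) mod N = i - Suc 0"
proof -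
  have e: "i + N - Suc 0 = (i - Suc 0) + N" using assms by simp
  show ?thesis using assms by (simp only: e mod_add_self2) simp
qed

lemma cyclic_block_starts_eq:
  assumes "0 < length s" "s ! 0 = s ! (length s - 1)"
  shows "cyclic_block_starts s c = block_starts s c"
proof -
  have "i \<in> cyclic_block_starts s c \<longleftrightarrow> i \<in> block_starts s c" for i
  proof (cases "i = 0")
    case True
    then show ?thesis using assms unfolding cyclic_block_starts_def block_starts_def by auto
  next
    case False
    then show ?thesis unfolding cyclic_block_starts_def block_starts_def by (auto simp: mod_pred)
  qed
  then show ?thesis by blast
qed


lemma num_blocks_eq_card_block_starts:
  assumes "0 < length s" "s ! 0 = s ! (length s - 1)" "\<exists>i<length s. s ! i \<noteq> c"
  shows "num_blocks s c = card (block_starts s c)"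
  using num_blocks_eq_card[OF assms(3)] cyclic_block_starts_eq[OF assms(1,2)] by simp

lemma previous_bit_differs:
  assumes "lin_X_blocks_ok s" "i < length s" "s ! i \<noteq> X" "0 < i" "s ! (i - 1) = X" "q < i"
    "s ! q \<noteq> X"
  shows "\<exists>p. p + 1 < i \<and> s ! p \<noteq> X \<and> (\<forall>l. p < l \<and> l < i \<longrightarrow> s ! l = X) \<and> s ! p \<noteq> s ! i"
proof -
  let ?P = "\<lambda>p. p < i \<and> s ! p \<noteq> X"
  define p where "p = Greatest ?P"
  have Pp: "?P p" unfolding p_def by (rule GreatestI_nat[of ?P q i]) (use assms(6,7) in auto)
  have mx: "y \<le> p" if "?P y" for y unfolding p_def
    by (rule Greatest_le_nat[of ?P y i]) (use that in auto)
  have "p \<noteq> i - 1" using Pp assms(5) by auto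
  then have p1: "p + 1 < i" using Pp by auto
  have btw: "\<forall>l. p < l \<and> l < i \<longrightarrow> s ! l = X"
  proof (intro allI impI)
    fix l assume "p < l \<and> l < i"
    then show "s ! l = X" using mx[of l] by force
  qed
  have "s ! p \<noteq> s ! i"
    by (rule lin_X_blocks_okD[OF assms(1) p1 assms(2)]) (use Pp assms(3) btw in auto)
  then show ?thesis using p1 Pp btw by blast
qed


lemma bit_constant_after_last_block_start:
  assumes lin: "lin_X_blocks_ok s" and last: "s ! (length s - 1) \<noteq> X"
    and m: "m < length s" "s ! m \<noteq> X"
    and no_start: "\<And>j. j \<in> block_starts s (flip (s ! m)) \<Longrightarrow> j \<le> m"
    and i: "m \<le> i" "i < length s"
  shows "s ! i = s ! m"
  using i
proof (induction i rule: less_induct)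
  case (less i)
  let ?c = "s ! m"
  show ?case
  proof (cases "i = m")
    case False
    then have "m < i" using less.prems by simp
    then have prev: "s ! (i - 1) = ?c" using less.IH[of "i - 1"] less.prems by simp
    have not_start: "j \<notin> block_starts s (flip ?c)" if "m < j" for j
      using no_start that by force
    show ?thesis
    proof (cases "s ! i = X")
      case False
      show ?thesis
      proof (rule ccontr)
        assume "s ! i \<noteq> ?c"
        then have "s ! i = flip ?c" using bit_eq_flip[OF m(2) False] by blast
        then have "i \<in> block_starts s (flip ?c)"
          using prev less.prems \<open>m < i\<close> m(2) by (simp add: block_starts_def)
        then show False using not_start[OF \<open>m < i\<close>] by blast
      qed
    next
      case True
      define j where "j = (LEAST j. i < j \<and> s ! j \<noteq> X)"
      have ex: "i < length s - 1 \<and> s ! (length s - 1) \<noteq> X"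
        using True last less.prems by (cases "i = length s - 1") auto
      have j: "i < j \<and> s ! j \<noteq> X" unfolding j_def by (rule LeastI[of _ "length s - 1"]) (rule ex)
      have "j \<le> length s - 1" unfolding j_def by (rule Least_le) (rule ex)
      then have "j < length s" using m(1) by linarith
      have between: "s ! l = X" if "i - 1 < l" "l < j" for l
      proof (cases "l = i")
        case False
        then have "i < l" using that by simp
        then show ?thesis
          using not_less_Least[of l "\<lambda>j. i < j \<and> s ! j \<noteq> X"] that(2) unfolding j_def by auto
      qed (use True in simp)
      have "s ! (i - 1) \<noteq> s ! j"
        by (rule lin_X_blocks_okD[OF lin]) (use j \<open>j < length s\<close> \<open>m < i\<close> prev m(2) between in auto)
      then have "s ! j = flip ?c" using bit_eq_flip[OF m(2)] j prev by simp
      moreover have "s ! (j - 1) = X" using between[of "j - 1"] j \<open>m < i\<close> by linarith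
      ultimately have "j \<in> block_starts s (flip ?c)"
        using j \<open>j < length s\<close> by (simp add: block_starts_def)
      then show ?thesis using not_start j \<open>m < i\<close> by simp
    qed
  qed simp
qed

lemma card_odd_less: "card {i::nat. i < k \<and> odd i} = k div 2"
proof (induction k)
  case 0 then show ?case by simp
next
  case (Suc k)
  show ?case
  proof (cases "odd k")
    case True
    have "{i. i < Suc k \<and> odd i} = insert k {i. i < k \<and> odd i}" using True by auto
    then show ?thesis using Suc True by (simp add: odd_two_times_div_two_succ)
  next
    case False
    have "{i. i < Suc k \<and> odd i} = {i. i < k \<and> odd i}" using False less_Suc_eq by auto
    then show ?thesis using Suc False by simp
  qed
qed

definition fill :: "sym list \<Rightarrow> nat \<Rightarrow> nat \<Rightarrow> sym \<Rightarrow> sym list" where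
  "fill t k r v = map (\<lambda>i. if k \<le> i \<and> i < r then v else t ! i) [0..<length t]"

lemma length_fill[simp]: "length (fill t k r v) = length t" by (simp add: fill_def)
lemma nth_fill: "i < length t \<Longrightarrow> fill t k r v ! i = (if k \<le> i \<and> i < r then v else t ! i)"
  by (simp add: fill_def)

context
  fixes t :: "sym list" and k r :: nat
  assumes lin: "lin_X_blocks_ok t" and kr: "0 < k" "k \<le> r" "r < length t"
    and bits: "t ! (k - 1) \<noteq> X" "t ! r \<noteq> X"
begin

lemma lin_X_blocks_ok_fill_bit:
  assumes "v \<noteq> X"
  shows "lin_X_blocks_ok (fill t k r v)"
  unfolding lin_X_blocks_ok_def
proof (intro allI impI)
  fix i j
  let ?u = "fill t k r v"
  assume a: "i + 1 < j \<and> j < length ?u \<and> ?u ! i \<noteq> X \<and> ?u ! j \<noteq> X \<and> (\<forall>l. i < l \<and> l < j \<longrightarrow> ?u ! l = X)"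
  then have between: "\<And>l. i < l \<Longrightarrow> l < j \<Longrightarrow> ?u ! l = X" by blast
  have bit: "?u ! l \<noteq> X" if "k - 1 \<le> l" "l \<le> r" for l
    using that kr bits assms by (cases "l = k - 1"; cases "l = r") (auto simp: nth_fill)
  have "j < k \<or> r \<le> i"
  proof (rule ccontr)
    assume "\<not> (j < k \<or> r \<le> i)"
    then have "i < max (k - 1) (i + 1)" "max (k - 1) (i + 1) < j" "k - 1 \<le> max (k - 1) (i + 1)"
      "max (k - 1) (i + 1) \<le> r" using a kr by auto
    then show False using between bit by blast
  qed
  then have "?u ! l = t ! l" if "i \<le> l" "l \<le> j" for l
    using that a by (auto simp: nth_fill)
  then show "?u ! i \<noteq> ?u ! j"
    using lin_X_blocks_okD[OF lin, of i j] a by auto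
qed

lemma lin_X_blocks_ok_fill_X:
  assumes "t ! (k - 1) \<noteq> t ! r"
  shows "lin_X_blocks_ok (fill t k r X)"
  unfolding lin_X_blocks_ok_def
proof (intro allI impI)
  fix i j
  let ?u = "fill t k r X"
  assume a: "i + 1 < j \<and> j < length ?u \<and> ?u ! i \<noteq> X \<and> ?u ! j \<noteq> X \<and> (\<forall>l. i < l \<and> l < j \<longrightarrow> ?u ! l = X)"
  then have between: "\<And>l. i < l \<Longrightarrow> l < j \<Longrightarrow> ?u ! l = X"
    and outside: "\<not> (k \<le> i \<and> i < r)" "\<not> (k \<le> j \<and> j < r)" by (auto simp: nth_fill)
  have ends: "?u ! (k - 1) \<noteq> X" "?u ! r \<noteq> X" using kr bits by (auto simp: nth_fill)
  show "?u ! i \<noteq> ?u ! j"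
  proof (cases "j < k \<or> r \<le> i")
    case True
    then have "?u ! l = t ! l" if "i \<le> l" "l \<le> j" for l
      using that a by (auto simp: nth_fill)
    then show ?thesis
      using lin_X_blocks_okD[OF lin, of i j] a by auto
  next
    case False
    have "\<not> i < k - 1"
    proof
      assume "i < k - 1"
      moreover have "k - 1 < j" using False kr(1) by linarith
      ultimately show False using between ends(1) by blast
    qed
    moreover have "\<not> r < j"
    proof
      assume "r < j"
      moreover have "i < r" using False by linarith
      ultimately show False using between ends(2) by blast
    qed
    ultimately have "i = k - 1" "j = r" using False outside by auto
    then show ?thesis using assms kr by (auto simp: nth_fill)
  qed
qed

end

lemma block_starts_eqI:
  assumes "length e = length t"
    "\<And>i. 0 < i \<Longrightarrow> i < length t \<Longrightarrow> (e ! i = c0 \<and> e ! (i - 1) \<noteq> c0) \<longleftrightarrow> (t ! i = c0 \<and> t ! (i - 1) \<noteq> c0)"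
  shows "block_starts e c0 = block_starts t c0"
  using assms unfolding block_starts_def by auto

lemma bit_before_block_start:
  assumes "lin_X_blocks_ok t" "t ! 0 \<noteq> X" "c \<noteq> X" "i \<in> block_starts t c"
  obtains p where "p < i" "t ! p = flip c" "\<And>l. p < l \<Longrightarrow> l < i \<Longrightarrow> t ! l = X"
proof -
  have i: "0 < i" "i < length t" "t ! i = c" "t ! (i - 1) \<noteq> c"
    using assms(4) by (auto simp: block_starts_def)
  show ?thesis
  proof (cases "t ! (i - 1) = X")
    case False
    then show ?thesis using that[of "i - 1"] i assms(3) bit_eq_flip by auto
  next
    case True
    then obtain p where "p + 1 < i" "t ! p \<noteq> X" "\<forall>l. p < l \<and> l < i \<longrightarrow> t ! l = X" "t ! p \<noteq> t ! i"
      using previous_bit_differs[OF assms(1) i(2) _ i(1) True i(1) assms(2)] i(3) assms(3) by blast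
    then show ?thesis using that[of p] i(3) assms(3) bit_eq_flip by auto
  qed
qed

definition run_start :: "sym list \<Rightarrow> sym \<Rightarrow> nat \<Rightarrow> nat" where
  "run_start s c i = (LEAST j. \<forall>l. j \<le> l \<and> l \<le> i \<longrightarrow> s ! l = c)"

text \<open>Each \<open>c\<close>-block of \<open>t\<close> lies in a \<open>c\<close>-block of any \<open>t' \<le> t\<close>, and distinct blocks of \<open>t\<close>
  lie in distinct blocks of \<open>t'\<close>, because between them \<open>t\<close>, hence \<open>t'\<close>, carries the other bit.\<close>

context
  fixes t t' :: "sym list" and c :: sym
  assumes le: "str_le t' t" and lin: "lin_X_blocks_ok t" and t0: "t ! 0 \<noteq> X" and cX: "c \<noteq> X"
begin

lemma run_start_run:
  assumes "i \<in> block_starts t c"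
  shows "run_start t' c i \<le> i" "run_start t' c i \<le> l \<Longrightarrow> l \<le> i \<Longrightarrow> t' ! l = c"
proof -
  have "t' ! i = c" using assms str_le_bit[OF le] cX by (auto simp: block_starts_def)
  then have ex: "\<forall>l. i \<le> l \<and> l \<le> i \<longrightarrow> t' ! l = c" by auto
  show "run_start t' c i \<le> i" unfolding run_start_def by (rule Least_le) (rule ex)
  show "t' ! l = c" if "run_start t' c i \<le> l" "l \<le> i"
    using LeastI[of "\<lambda>j. \<forall>l. j \<le> l \<and> l \<le> i \<longrightarrow> t' ! l = c", OF ex] that
    unfolding run_start_def by blast
qed

lemma run_start_in_block_starts:
  assumes i: "i \<in> block_starts t c"
  shows "run_start t' c i \<in> block_starts t' c"
proof -
  let ?j = "run_start t' c i"
  obtain p where p: "p < i" "t ! p = flip c"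
    using bit_before_block_start[OF lin t0 cX i] by blast
  have "t' ! p \<noteq> c" using str_le_bit[OF le, of p] p i cX by (auto simp: block_starts_def)
  have "p < ?j"
  proof (rule ccontr)
    assume "\<not> p < ?j"
    then have "t' ! p = c" using run_start_run(2)[OF i] p(1) by simp
    with \<open>t' ! p \<noteq> c\<close> show False ..
  qed
  moreover have "t' ! (?j - 1) \<noteq> c"
  proof
    assume c: "t' ! (?j - 1) = c"
    have "\<forall>l. ?j - 1 \<le> l \<and> l \<le> i \<longrightarrow> t' ! l = c"
    proof (intro allI impI)
      fix l assume "?j - 1 \<le> l \<and> l \<le> i"
      then show "t' ! l = c" using run_start_run(2)[OF i, of l] c by (cases "l = ?j - 1") auto
    qed
    then have "?j \<le> ?j - 1" unfolding run_start_def by (rule Least_le)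
    with \<open>p < ?j\<close> show False by simp
  qed
  ultimately show ?thesis
    using run_start_run[OF i] i le by (auto simp: block_starts_def str_le_def)
qed

lemma inj_on_run_start: "inj_on (run_start t' c) (block_starts t c)"
proof -
  have False if i1: "i1 \<in> block_starts t c" and i2: "i2 \<in> block_starts t c" and "i1 < i2"
    and eq: "run_start t' c i1 = run_start t' c i2" for i1 i2
  proof -
    obtain p where p: "p < i2" "t ! p = flip c" "\<And>l. p < l \<Longrightarrow> l < i2 \<Longrightarrow> t ! l = X"
      using bit_before_block_start[OF lin t0 cX i2] by blast
    have "t ! i1 = c" using i1 by (simp add: block_starts_def)
    then have "i1 \<noteq> p" "\<not> p < i1" using p(2) p(3)[of i1] \<open>i1 < i2\<close> cX by auto
    then have "run_start t' c i2 \<le> p" using run_start_run(1)[OF i1] eq by simp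
    then have "t' ! p = c" using run_start_run(2)[OF i2] p(1) by simp
    moreover have "t' ! p \<noteq> c"
      using str_le_bit[OF le, of p] p i2 cX by (auto simp: block_starts_def)
    ultimately show False by simp
  qed
  then show ?thesis by (intro inj_onI) (metis linorder_neqE_nat)
qed

end

section \<open>Strings with a fixed bit at both ends\<close>

locale pinned_strings =
  fixes N M :: nat and b :: sym
  assumes M_pos: "0 < M" and N_gt_2M: "2 * M < N" and b_bit: "b \<noteq> X"
begin

definition Str_bb :: "sym list set" where
  "Str_bb = {s \<in> Str N M. s ! 0 = b \<and> s ! (N - 1) = b}"

lemma N_gt_2: "2 < N" using M_pos N_gt_2M by linarith

lemma num_blocks_eq_M_iff:
  assumes "length s = N" "s ! 0 = b" "s ! (N - 1) = b"
  shows "num_blocks s Z0 = M \<and> num_blocks s O1 = M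
    \<longleftrightarrow> card (block_starts s Z0) = M \<and> card (block_starts s O1) = M"
proof (cases "\<forall>i<N. s ! i = b")
  case True
  then have "num_blocks s (flip b) = 0" "block_starts s (flip b) = {}"
    using assms N_gt_2 b_bit by (auto simp: num_blocks_def block_starts_def)
  then show ?thesis using M_pos b_bit by (cases b) auto
next
  case not_constant: False
  have ex: "\<exists>i<length s. s ! i \<noteq> c" for c
  proof (cases "c = b")
    case True
    then show ?thesis using not_constant assms(1) by auto
  next
    case False
    then show ?thesis using assms N_gt_2 by (intro exI[of _ 0]) auto
  qed
  have "num_blocks s c = card (block_starts s c)" for c
    using num_blocks_eq_card_block_starts[OF _ _ ex] assms N_gt_2 by simp
  then show ?thesis by simp
qed

lemma Str_bb_iff: "s \<in> Str_bb \<longleftrightarrow> length s = N \<and> s ! 0 = b \<and> s ! (N - 1) = b \<and> lin_X_blocks_ok s \<and>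
    card (block_starts s Z0) = M \<and> card (block_starts s O1) = M"
proof -
  have "X_blocks_ok s \<longleftrightarrow> lin_X_blocks_ok s" if "length s = N" "s ! 0 = b" "s ! (N - 1) = b"
    using X_blocks_ok_iff_lin[of s] that N_gt_2 b_bit by simp
  then show ?thesis unfolding Str_bb_def Str_def using num_blocks_eq_M_iff by blast
qed

definition alt :: "nat \<Rightarrow> sym" where "alt i = (if even i then b else flip b)"

lemma alt_neq_X[simp]: "alt i \<noteq> X" using b_bit by (simp add: alt_def)
lemma alt_Suc: "alt (Suc i) = flip (alt i)" by (simp add: alt_def)
lemma alt_pred: "0 < k \<Longrightarrow> alt (k - 1) = flip (alt k)"
  by (cases k) (auto simp: alt_Suc)
lemma flip_b_neq: "flip b \<noteq> b" "b \<noteq> flip b" using flip_neq[OF b_bit] by auto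
lemma alt_eq_flip_b_iff: "alt i = flip b \<longleftrightarrow> odd i" using flip_b_neq by (auto simp: alt_def)
lemma alt_eq_b_iff: "alt i = b \<longleftrightarrow> even i" using flip_b_neq by (auto simp: alt_def)

definition alt_prefix :: "nat \<Rightarrow> sym list set" where
  "alt_prefix k = {t \<in> Str_bb. \<forall>i<k. t ! i = alt i}"

definition gap_end :: "nat \<Rightarrow> sym list \<Rightarrow> nat" where
  "gap_end k t = (LEAST i. k \<le> i \<and> t ! i = alt k)"

definition erase_gap :: "nat \<Rightarrow> sym list \<Rightarrow> sym list" where
  "erase_gap k t = fill t k (gap_end k t) X"

definition close_gap :: "nat \<Rightarrow> sym list \<Rightarrow> sym list" where
  "close_gap k t = fill t k (gap_end k t) (alt k)"

lemma card_block_starts: "t \<in> Str_bb \<Longrightarrow> c \<noteq> X \<Longrightarrow> card (block_starts t c) = M"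
  using Str_bb_iff by (cases c) auto

lemma Str_bb_length: "t \<in> Str_bb \<Longrightarrow> length t = N" using Str_bb_iff by auto
lemma Str_bb_lin: "t \<in> Str_bb \<Longrightarrow> lin_X_blocks_ok t" using Str_bb_iff by auto
lemma Str_bb_first: "t \<in> Str_bb \<Longrightarrow> t ! 0 = b" using Str_bb_iff by auto
lemma Str_bb_last: "t \<in> Str_bb \<Longrightarrow> t ! (N - 1) = b" using Str_bb_iff by auto

lemma ex_alt_after:
  assumes t: "t \<in> alt_prefix k" and k: "1 \<le> k" "k \<le> 2 * M"
  shows "\<exists>i. k \<le> i \<and> i < N \<and> t ! i = alt k"
proof (cases "even k")
  case True
  then show ?thesis using Str_bb_last[of t] t k N_gt_2M
    by (intro exI[of _ "N - 1"]) (auto simp: alt_prefix_def alt_def)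
next
  case False
  show ?thesis
  proof (rule ccontr)
    assume no: "\<not> ?thesis"
    have t_Str_bb: "t \<in> Str_bb" using t by (simp add: alt_prefix_def)
    have "block_starts t (flip b) \<subseteq> {i. i < k \<and> odd i}"
    proof
      fix i assume i: "i \<in> block_starts t (flip b)"
      then have "i < N" "t ! i = flip b"
        using Str_bb_length[OF t_Str_bb] by (auto simp: block_starts_def)
      have ak: "alt k = flip b" using False alt_eq_flip_b_iff by simp
      have "i < k"
      proof (rule ccontr)
        assume "\<not> i < k"
        then have "k \<le> i \<and> i < N \<and> t ! i = alt k" using \<open>i < N\<close> \<open>t ! i = flip b\<close> ak by simp
        then show False using no by blast
      qed
      then have "t ! i = alt i" using t by (simp add: alt_prefix_def)
      then show "i \<in> {i. i < k \<and> odd i}" using \<open>i < k\<close> \<open>t ! i = flip b\<close> alt_eq_flip_b_iff by auto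
    qed
    then have "card (block_starts t (flip b)) \<le> k div 2"
      using card_mono[of "{i. i < k \<and> odd i}"] card_odd_less[of k] by auto
    moreover have "card (block_starts t (flip b)) = M"
      using card_block_starts[OF t_Str_bb] b_bit by simp
    moreover have "k div 2 < M" using k False by presburger
    ultimately show False by simp
  qed
qed

lemma gap_end_props:
  assumes t: "t \<in> alt_prefix k" and k: "1 \<le> k" "k \<le> 2 * M"
  shows "k \<le> gap_end k t" "gap_end k t < N" "t ! gap_end k t = alt k"
    "\<And>i. k \<le> i \<Longrightarrow> i < gap_end k t \<Longrightarrow> t ! i \<noteq> alt k"
proof -
  obtain i0 where i0: "k \<le> i0" "i0 < N" "t ! i0 = alt k" using ex_alt_after[OF assms] by blast
  have P: "k \<le> gap_end k t \<and> t ! gap_end k t = alt k" unfolding gap_end_def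
    by (rule LeastI[of _ i0]) (use i0 in auto)
  then show "k \<le> gap_end k t" "t ! gap_end k t = alt k" by auto
  have "gap_end k t \<le> i0" unfolding gap_end_def by (rule Least_le) (use i0 in auto)
  then show "gap_end k t < N" using i0 by simp
  fix i assume "k \<le> i" "i < gap_end k t"
  then show "t ! i \<noteq> alt k"
    using not_less_Least[of i "\<lambda>i. k \<le> i \<and> t ! i = alt k"] unfolding gap_end_def by auto
qed

lemma gap_props:
  assumes t: "t \<in> alt_prefix k" and k: "1 \<le> k" "k \<le> 2 * M"
  shows "t ! (k - 1) = flip (alt k)"
    "\<And>i. k \<le> i \<Longrightarrow> i < gap_end k t \<Longrightarrow> t ! i = flip (alt k) \<or> t ! i = X"
    "\<And>i. k \<le> i \<Longrightarrow> i < gap_end k t \<Longrightarrow> t ! i = flip (alt k) \<Longrightarrow> t ! (i - 1) = flip (alt k)"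
proof -
  have t_Str_bb: "t \<in> Str_bb" using t by (simp add: alt_prefix_def)
  show km: "t ! (k - 1) = flip (alt k)" using t k alt_pred[of k] by (simp add: alt_prefix_def)
  show reg: "t ! i = flip (alt k) \<or> t ! i = X" if "k \<le> i" "i < gap_end k t" for i
    using gap_end_props(4)[OF assms that] bit_eq_flip[of "alt k" "t ! i"] by auto
  fix i assume i: "k \<le> i" "i < gap_end k t" "t ! i = flip (alt k)"
  show "t ! (i - 1) = flip (alt k)"
  proof (cases "i = k")
    case True then show ?thesis using km by simp
  next
    case False
    then have ik: "k \<le> i - 1" "i - 1 < gap_end k t" using i by auto
    show ?thesis
    proof (rule ccontr)
      assume ne: "t ! (i - 1) \<noteq> flip (alt k)"
      then have X: "t ! (i - 1) = X" using reg[OF ik] by simp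
      have iN: "i < length t" using gap_end_props(2)[OF assms] i Str_bb_length[OF t_Str_bb] by simp
      have q: "k - 1 < i" using ik k by simp
      have ne1: "t ! i \<noteq> X" using i(3) alt_neq_X[of k] flip_eq_X_iff by metis
      have i0: "0 < i" using ik k by simp
      have qb: "t ! (k - 1) \<noteq> X" using km alt_neq_X[of k] flip_eq_X_iff by metis
      obtain p where p: "p + 1 < i" "t ! p \<noteq> X" "\<forall>l. p < l \<and> l < i \<longrightarrow> t ! l = X" "t ! p \<noteq> t ! i"
        using previous_bit_differs[OF Str_bb_lin[OF t_Str_bb] iN ne1 i0 X q qb] by blast
      have pc: "t ! p = alt k" using p(2,4) i(3) bit_eq_if_neq_flip[of "alt k" "t ! p"] by simp
      show False
      proof (cases "p < k - 1")
        case True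
        then have "t ! (k - 1) = X" using p(3) ik by auto
        then show False using km by simp
      next
        case False
        then consider "p = k - 1" | "k \<le> p" by linarith
        then show False
        proof cases
          case 1 then show False using km pc by simp
        next
          case 2 then show False using gap_end_props(4)[OF assms 2] pc p(1) i(2) by simp
        qed
      qed
    qed
  qed
qed



lemma alt_prefix_Str_bb: "t \<in> alt_prefix k \<Longrightarrow> t \<in> Str_bb"
  by (simp add: alt_prefix_def)

lemma alt_prefix_length: "t \<in> alt_prefix k \<Longrightarrow> length t = N"
  by (simp add: alt_prefix_def Str_bb_length)

context
  fixes k :: nat and t :: "sym list"
  assumes t: "t \<in> alt_prefix k" and k1: "1 \<le> k" and k2: "k \<le> 2 * M"
begin

lemma erase_gap_nth: "i < N \<Longrightarrow> erase_gap k t ! i = (if k \<le> i \<and> i < gap_end k t then X else t ! i)"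
  unfolding erase_gap_def using alt_prefix_length[OF t] by (simp add: nth_fill)
lemma close_gap_nth:
  "i < N \<Longrightarrow> close_gap k t ! i = (if k \<le> i \<and> i < gap_end k t then alt k else t ! i)"
  unfolding close_gap_def using alt_prefix_length[OF t] by (simp add: nth_fill)
lemma erase_gap_in: "i < N \<Longrightarrow> k \<le> i \<Longrightarrow> i < gap_end k t \<Longrightarrow> erase_gap k t ! i = X"
  using erase_gap_nth by simp
lemma erase_gap_out: "i < N \<Longrightarrow> \<not> (k \<le> i \<and> i < gap_end k t) \<Longrightarrow> erase_gap k t ! i = t ! i"
  using erase_gap_nth by (simp only: if_not_P if_False)
lemma close_gap_in: "i < N \<Longrightarrow> k \<le> i \<Longrightarrow> i < gap_end k t \<Longrightarrow> close_gap k t ! i = alt k"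
  using close_gap_nth by simp
lemma close_gap_out: "i < N \<Longrightarrow> \<not> (k \<le> i \<and> i < gap_end k t) \<Longrightarrow> close_gap k t ! i = t ! i"
  using close_gap_nth by (simp only: if_not_P if_False)
lemma length_erase_gap: "length (erase_gap k t) = N" unfolding erase_gap_def
  using alt_prefix_length[OF t] by simp
lemma length_close_gap: "length (close_gap k t) = N" unfolding close_gap_def
  using alt_prefix_length[OF t] by simp

lemma block_starts_erase_gap:
  assumes c0: "c0 \<noteq> X"
  shows "block_starts (erase_gap k t) c0 = block_starts t c0"
proof (rule block_starts_eqI)
  show "length (erase_gap k t) = length t" using length_erase_gap alt_prefix_length[OF t] by simp
  fix i assume i: "0 < i" "i < length t"
  let ?r = "gap_end k t" and ?c = "alt k"
  have iN: "i < N" "i - 1 < N" using i alt_prefix_length[OF t] by auto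
  consider "k \<le> i \<and> i < ?r" | "i = ?r" | "i < k \<or> ?r < i" by linarith
  then show "(erase_gap k t ! i = c0 \<and> erase_gap k t ! (i - 1) \<noteq> c0)
    \<longleftrightarrow> (t ! i = c0 \<and> t ! (i - 1) \<noteq> c0)"
  proof cases
    case 1
    have l: "\<not> (erase_gap k t ! i = c0)" using erase_gap_nth[OF iN(1)] 1 c0 by simp
    have "\<not> (t ! i = c0 \<and> t ! (i - 1) \<noteq> c0)"
    proof
      assume a: "t ! i = c0 \<and> t ! (i - 1) \<noteq> c0"
      then have "t ! i = flip ?c" using gap_props(2)[OF t k1 k2, of i] 1 c0 by auto
      then have "t ! (i - 1) = flip ?c" using gap_props(3)[OF t k1 k2, of i] 1 by auto
      then show False using a \<open>t ! i = flip ?c\<close> by simp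
    qed
    then show ?thesis using l by simp
  next
    case 2
    have e1: "erase_gap k t ! i = t ! i" using erase_gap_out[OF iN(1)] 2 by simp
    show ?thesis
    proof (cases "k < ?r")
      case True
      have rg1: "k \<le> i - 1" "i - 1 < ?r" using 2 True by auto
      have "erase_gap k t ! (i - 1) = X" using erase_gap_in[OF iN(2) rg1] .
      moreover have "t ! (i - 1) \<noteq> ?c" using gap_end_props(4)[OF t k1 k2 rg1] .
      ultimately show ?thesis using e1 2 gap_end_props(3)[OF t k1 k2] c0 by auto
    next
      case False
      then have "\<not> (k \<le> i - 1 \<and> i - 1 < ?r)" using 2 gap_end_props(1)[OF t k1 k2] k1 by auto
      then have "erase_gap k t ! (i - 1) = t ! (i - 1)" using erase_gap_out[OF iN(2)] by blast
      then show ?thesis using e1 by simp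
    qed
  next
    case 3
    then have "\<not> (k \<le> i \<and> i < ?r)" "\<not> (k \<le> i - 1 \<and> i - 1 < ?r)" using i by auto
    then have "erase_gap k t ! i = t ! i" "erase_gap k t ! (i - 1) = t ! (i - 1)"
      using erase_gap_out[OF iN(1)] erase_gap_out[OF iN(2)] by blast+
    then show ?thesis by simp
  qed
qed

lemma lin_X_blocks_ok_erase_gap: "lin_X_blocks_ok (erase_gap k t)"
  unfolding erase_gap_def
  using lin_X_blocks_ok_fill_X[OF Str_bb_lin[OF alt_prefix_Str_bb[OF t]]] k1
    gap_end_props[OF t k1 k2] gap_props(1)[OF t k1 k2] alt_prefix_length[OF t] by simp

lemma erase_gap_in_Str_bb: "erase_gap k t \<in> Str_bb"
proof -
  have "erase_gap k t ! 0 = b"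
    using erase_gap_nth[of 0] N_gt_2 k1 Str_bb_first[OF alt_prefix_Str_bb[OF t]] by simp
  moreover have "\<not> (k \<le> N - 1 \<and> N - 1 < gap_end k t)" using gap_end_props(2)[OF t k1 k2] by arith
  then have "erase_gap k t ! (N - 1) = b"
    using erase_gap_out[of "N - 1"] N_gt_2 Str_bb_last[OF alt_prefix_Str_bb[OF t]] by simp
  moreover have "card (block_starts (erase_gap k t) c) = M" if "c \<noteq> X" for c
    using block_starts_erase_gap[OF that] card_block_starts[OF alt_prefix_Str_bb[OF t] that] by simp
  ultimately show ?thesis unfolding Str_bb_iff
    using length_erase_gap lin_X_blocks_ok_erase_gap by simp
qed

lemma str_le_erase_gap: "str_le t (erase_gap k t)"
  unfolding str_le_def using length_erase_gap alt_prefix_length[OF t] erase_gap_nth gap_props(2)[OF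
    t k1 k2] by auto

lemma close_gap_str_le_erase_gap: "str_le (close_gap k t) (erase_gap k t)"
  unfolding str_le_def using length_erase_gap length_close_gap erase_gap_nth close_gap_nth by auto


lemma block_starts_close_gap_other:
  assumes c0: "c0 \<noteq> X" "c0 \<noteq> alt k"
  shows "block_starts (close_gap k t) c0 = block_starts t c0"
proof (rule block_starts_eqI)
  show "length (close_gap k t) = length t" using length_close_gap alt_prefix_length[OF t] by simp
  fix i assume i: "0 < i" "i < length t"
  let ?r = "gap_end k t" and ?c = "alt k"
  have iN: "i < N" "i - 1 < N" using i alt_prefix_length[OF t] by auto
  have c0_flip: "c0 = flip ?c" using bit_eq_flip[of ?c c0] c0 by simp
  consider "k \<le> i \<and> i < ?r" | "i = ?r" | "i < k \<or> ?r < i" by linarith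
  then show "(close_gap k t ! i = c0 \<and> close_gap k t ! (i - 1) \<noteq> c0)
    \<longleftrightarrow> (t ! i = c0 \<and> t ! (i - 1) \<noteq> c0)"
  proof cases
    case 1
    have l: "close_gap k t ! i \<noteq> c0" using close_gap_in[OF iN(1)] 1 c0 by simp
    have "\<not> (t ! i = c0 \<and> t ! (i - 1) \<noteq> c0)"
    proof
      assume a: "t ! i = c0 \<and> t ! (i - 1) \<noteq> c0"
      then have "t ! (i - 1) = flip ?c" using gap_props(3)[OF t k1 k2, of i] 1 c0_flip by auto
      then show False using a c0_flip by simp
    qed
    then show ?thesis using l by simp
  next
    case 2
    have "close_gap k t ! i = ?c"
      using close_gap_out[OF iN(1)] 2 gap_end_props(3)[OF t k1 k2] by simp
    then show ?thesis using 2 gap_end_props(3)[OF t k1 k2] c0 by simp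
  next
    case 3
    then have "\<not> (k \<le> i \<and> i < ?r)" "\<not> (k \<le> i - 1 \<and> i - 1 < ?r)" using i by auto
    then have "close_gap k t ! i = t ! i" "close_gap k t ! (i - 1) = t ! (i - 1)"
      using close_gap_out[OF iN(1)] close_gap_out[OF iN(2)] by blast+
    then show ?thesis by simp
  qed
qed

lemma gap_end_block_start: "gap_end k t \<in> block_starts t (alt k)"
proof -
  let ?r = "gap_end k t"
  have "t ! (?r - 1) \<noteq> alt k"
  proof (cases "k < ?r")
    case True
    then show ?thesis using gap_end_props(4)[OF t k1 k2, of "?r - 1"] by simp
  next
    case False
    then have "?r = k" using gap_end_props(1)[OF t k1 k2] by simp
    then show ?thesis using gap_props(1)[OF t k1 k2] by simp
  qed
  then show ?thesis unfolding block_starts_def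
    using gap_end_props[OF t k1 k2] alt_prefix_length[OF t] k1 by auto
qed

lemma block_starts_close_gap:
  "block_starts (close_gap k t) (alt k) = insert k (block_starts t (alt k) - {gap_end k t})"
proof -
  let ?r = "gap_end k t" and ?c = "alt k" and ?u = "close_gap k t"
  have "i \<in> block_starts ?u ?c \<longleftrightarrow> i \<in> insert k (block_starts t ?c - {?r})" for i
  proof (cases "0 < i \<and> i < N")
    case False
    then have "i \<noteq> k" using k1 k2 N_gt_2M by auto
    then show ?thesis using False alt_prefix_length[OF t] length_close_gap
      unfolding block_starts_def by auto
  next
    case True
    then have iN: "i < N" "i - 1 < N" "0 < i" by auto
    consider "i = k" | "k < i \<and> i \<le> ?r" | "i < k \<or> ?r < i" by linarith
    then show ?thesis
    proof cases
      case 1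
      have a: "?u ! i = ?c"
      proof (cases "k < ?r")
        case True then show ?thesis using close_gap_in[OF iN(1)] 1 by simp
      next
        case False
        then have "?r = k" using gap_end_props(1)[OF t k1 k2] by simp
        then show ?thesis using close_gap_out[OF iN(1)] 1 gap_end_props(3)[OF t k1 k2] by simp
      qed
      have "\<not> (k \<le> i - 1 \<and> i - 1 < ?r)" using 1 k1 by arith
      then have "?u ! (i - 1) = t ! (k - 1)" using close_gap_out[OF iN(2)] 1 by simp
      then have "?u ! (i - 1) \<noteq> ?c" using gap_props(1)[OF t k1 k2] by simp
      then show ?thesis using a iN length_close_gap 1 unfolding block_starts_def by auto
    next
      case 2
      have rg2: "k \<le> i - 1" "i - 1 < ?r" using 2 by auto
      have "?u ! (i - 1) = ?c" using close_gap_in[OF iN(2) rg2] .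
      then have l: "i \<notin> block_starts ?u ?c" unfolding block_starts_def by auto
      have "i \<notin> block_starts t ?c - {?r}"
      proof
        assume "i \<in> block_starts t ?c - {?r}"
        then have "t ! i = ?c" "i \<noteq> ?r" unfolding block_starts_def by auto
        then show False using gap_end_props(4)[OF t k1 k2, of i] 2 by simp
      qed
      then show ?thesis using l 2 by simp
    next
      case 3
      then have "\<not> (k \<le> i \<and> i < ?r)" "\<not> (k \<le> i - 1 \<and> i - 1 < ?r)" using iN by auto
      then have e: "?u ! i = t ! i" "?u ! (i - 1) = t ! (i - 1)"
        using close_gap_out[OF iN(1)] close_gap_out[OF iN(2)] by blast+
      have "i \<noteq> k" "i \<noteq> ?r" using 3 gap_end_props(1)[OF t k1 k2] by auto
      then show ?thesis using e iN alt_prefix_length[OF t] length_close_gap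
        unfolding block_starts_def by auto
    qed
  qed
  then show ?thesis by blast
qed

lemma card_block_starts_close_gap:
  "card (block_starts (close_gap k t) (alt k)) = card (block_starts t (alt k))"
proof (cases "k = gap_end k t")
  case True
  then show ?thesis using block_starts_close_gap gap_end_block_start by (simp add: insert_absorb)
next
  case False
  have "k \<notin> block_starts t (alt k)"
    using gap_end_props(4)[OF t k1 k2, of k] gap_end_props(1)[OF t k1 k2] False
      unfolding block_starts_def by auto
  then have "card (insert k (block_starts t (alt k) - {gap_end k t})) 
    = Suc (card (block_starts t (alt k) - {gap_end k t}))"
    by simp
  also have "\<dots> = card (block_starts t (alt k))"
    using gap_end_block_start card_Diff1_less[of "block_starts t (alt k)" "gap_end k t"]
    by (simp add: card_Diff_singleton)
  finally show ?thesis using block_starts_close_gap by simp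
qed

lemma lin_X_blocks_ok_close_gap: "lin_X_blocks_ok (close_gap k t)"
  unfolding close_gap_def
  using lin_X_blocks_ok_fill_bit[OF Str_bb_lin[OF alt_prefix_Str_bb[OF t]]] k1
    gap_end_props[OF t k1 k2] gap_props(1)[OF t k1 k2] alt_prefix_length[OF t] by simp

lemma close_gap_in_alt_prefix: "close_gap k t \<in> alt_prefix (Suc k)"
proof -
  have "\<not> (k \<le> 0 \<and> 0 < gap_end k t)" using k1 by simp
  then have c0: "close_gap k t ! 0 = b"
    using close_gap_out[of 0] N_gt_2 Str_bb_first[OF alt_prefix_Str_bb[OF t]] by simp
  have "\<not> (k \<le> N - 1 \<and> N - 1 < gap_end k t)" using gap_end_props(2)[OF t k1 k2] by arith
  then have cN: "close_gap k t ! (N - 1) = b"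
    using close_gap_out[of "N - 1"] N_gt_2 Str_bb_last[OF alt_prefix_Str_bb[OF t]] by simp
  have card_M: "card (block_starts (close_gap k t) c) = M" if "c \<noteq> X" for c
  proof (cases "c = alt k")
    case True
    then show ?thesis using card_block_starts_close_gap card_block_starts[OF alt_prefix_Str_bb[OF t]
      that] by simp
  next
    case False
    then show ?thesis using block_starts_close_gap_other[OF that False] card_block_starts[OF
      alt_prefix_Str_bb[OF t] that] by simp
  qed
  have Str_bb: "close_gap k t \<in> Str_bb" unfolding Str_bb_iff
    using length_close_gap lin_X_blocks_ok_close_gap c0 cN card_M by simp
  have "close_gap k t ! i = alt i" if "i < Suc k" for i
  proof (cases "i < k")
    case True
    then have "\<not> (k \<le> i \<and> i < gap_end k t)" by simp
    then show ?thesis using close_gap_out[of i] True t k2 N_gt_2M by (simp add: alt_prefix_def)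
  next
    case False
    then have ik: "i = k" using that by simp
    show ?thesis
    proof (cases "k < gap_end k t")
      case True then show ?thesis using close_gap_in[of k] ik k2 N_gt_2M by simp
    next
      case False
      then have "gap_end k t = k" using gap_end_props(1)[OF t k1 k2] by simp
      then show ?thesis using close_gap_out[of k] ik k2 N_gt_2M gap_end_props(3)[OF t k1 k2] by simp
    qed
  qed
  then show ?thesis using Str_bb by (simp add: alt_prefix_def)
qed

end

lemma gap_end_mono:
  assumes t: "t \<in> alt_prefix k" and t': "t' \<in> alt_prefix k" and k: "1 \<le> k" "k \<le> 2 * M"
    and le: "str_le t' t"
  shows "gap_end k t' \<le> gap_end k t"
proof -
  have "t' ! gap_end k t = alt k"
    using str_le_bit[OF le, of "gap_end k t"] gap_end_props[OF t k] alt_prefix_length[OF t] by simp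
  then show ?thesis unfolding gap_end_def[of k t']
    by (intro Least_le) (use gap_end_props(1)[OF t k] in simp)
qed

lemma erase_gap_mono:
  assumes t: "t \<in> alt_prefix k" and t': "t' \<in> alt_prefix k" and k: "1 \<le> k" "k \<le> 2 * M"
    and le: "str_le t' t"
  shows "str_le (erase_gap k t') (erase_gap k t)"
  unfolding str_le_def
proof (intro conjI allI impI)
  show "length (erase_gap k t') = length (erase_gap k t)"
    using length_erase_gap[OF t k] length_erase_gap[OF t' k] by simp
  fix i assume "i < length (erase_gap k t)"
  then have i: "i < N" using length_erase_gap[OF t k] by simp
  have rm: "gap_end k t' \<le> gap_end k t" by (rule gap_end_mono[OF assms])
  show "erase_gap k t ! i = erase_gap k t' ! i \<or> erase_gap k t ! i = X \<and> erase_gap k t' ! i \<noteq> X"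
  proof (cases "k \<le> i \<and> i < gap_end k t")
    case True
    then show ?thesis using erase_gap_in[OF t k i] by auto
  next
    case False
    then have "\<not> (k \<le> i \<and> i < gap_end k t')" using rm by auto
    then have "erase_gap k t' ! i = t' ! i" "erase_gap k t ! i = t ! i"
      using erase_gap_out[OF t' k i] erase_gap_out[OF t k i] False by auto
    then show ?thesis using le i alt_prefix_length[OF t] unfolding str_le_def by auto
  qed
qed

text \<open>The blocks of \<open>alt k\<close> in \<open>t\<close> inject into those of \<open>t'\<close>; as both have \<open>M\<close> of them,
  the block of \<open>t'\<close> starting at \<open>gap_end k t'\<close> contains a block of \<open>t\<close>, which cannot start
  before \<open>gap_end k t\<close>.\<close>

lemma alt_between_gap_ends:
  assumes t: "t \<in> alt_prefix k" and t': "t' \<in> alt_prefix k" and k: "1 \<le> k" "k \<le> 2 * M"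
    and le: "str_le t' t" and l: "gap_end k t' \<le> l" "l < gap_end k t"
  shows "t' ! l = alt k"
proof -
  let ?c = "alt k" and ?\<phi> = "run_start t' (alt k)"
  have t_Str_bb: "t \<in> Str_bb" and t'_Str_bb: "t' \<in> Str_bb" using t t' by (auto simp: alt_prefix_def)
  have lin: "lin_X_blocks_ok t" and t0: "t ! 0 \<noteq> X"
    using Str_bb_lin[OF t_Str_bb] Str_bb_first[OF t_Str_bb] b_bit by auto
  note run = run_start_run[OF le lin t0 alt_neq_X]
  have "?\<phi> ` block_starts t ?c = block_starts t' ?c"
  proof (rule card_subset_eq)
    show "?\<phi> ` block_starts t ?c \<subseteq> block_starts t' ?c"
      using run_start_in_block_starts[OF le lin t0 alt_neq_X] by blast
    show "card (?\<phi> ` block_starts t ?c) = card (block_starts t' ?c)"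
      using card_image[OF inj_on_run_start[OF le lin t0 alt_neq_X]]
        card_block_starts[OF t_Str_bb] card_block_starts[OF t'_Str_bb] by simp
  qed simp
  then obtain i where i: "i \<in> block_starts t ?c" "?\<phi> i = gap_end k t'"
    using gap_end_block_start[OF t' k] by (metis imageE)
  have "k \<le> i" using run(1)[OF i(1)] gap_end_props(1)[OF t' k] i(2) by simp
  then have "gap_end k t \<le> i"
    using gap_end_props(4)[OF t k, of i] i(1) by (force simp: block_starts_def)
  then show ?thesis using run(2)[OF i(1), of l] i(2) l by simp
qed

lemma close_gap_mono:
  assumes t: "t \<in> alt_prefix k" and t': "t' \<in> alt_prefix k" and k: "1 \<le> k" "k \<le> 2 * M"
    and le: "str_le t' t"
  shows "str_le (close_gap k t') (close_gap k t)"
  unfolding str_le_def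
proof (intro conjI allI impI)
  show "length (close_gap k t') = length (close_gap k t)"
    using length_close_gap[OF t k] length_close_gap[OF t' k] by simp
  fix i assume "i < length (close_gap k t)"
  then have i: "i < N" using length_close_gap[OF t k] by simp
  have rm: "gap_end k t' \<le> gap_end k t" by (rule gap_end_mono[OF assms])
  show "close_gap k t ! i = close_gap k t' ! i \<or> close_gap k t ! i = X \<and> close_gap k t' ! i \<noteq> X"
  proof (cases "k \<le> i \<and> i < gap_end k t")
    case True
    have a: "close_gap k t ! i = alt k" using close_gap_in[OF t k i] True by simp
    show ?thesis
    proof (cases "i < gap_end k t'")
      case True
      then show ?thesis using a close_gap_in[OF t' k i] \<open>k \<le> i \<and> i < gap_end k t\<close> by simp
    next
      case False
      then have "close_gap k t' ! i = t' ! i" using close_gap_out[OF t' k i] by simp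
      also have "\<dots> = alt k" using alt_between_gap_ends[OF assms, of i] False True by simp
      finally show ?thesis using a by simp
    qed
  next
    case False
    then have "\<not> (k \<le> i \<and> i < gap_end k t')" using rm by auto
    then have "close_gap k t' ! i = t' ! i" "close_gap k t ! i = t ! i"
      using close_gap_out[OF t' k i] close_gap_out[OF t k i] False by auto
    then show ?thesis using le i alt_prefix_length[OF t] unfolding str_le_def by auto
  qed
qed

lemma alt_prefix_final_block_starts:
  assumes t: "t \<in> alt_prefix (2 * M + 1)"
  shows "block_starts t (flip b) = {i. i < 2 * M \<and> odd i}"
proof (rule card_subset_eq[symmetric])
  have alt: "t ! i = alt i" if "i \<le> 2 * M" for i using t that by (simp add: alt_prefix_def)
  show "{i. i < 2 * M \<and> odd i} \<subseteq> block_starts t (flip b)"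
  proof
    fix i assume "i \<in> {i. i < 2 * M \<and> odd i}"
    then have i: "i < 2 * M" "odd i" "0 < i" by (auto intro: odd_pos)
    then have "t ! i = flip b" "t ! (i - 1) = b"
      using alt[of i] alt[of "i - 1"] alt_eq_flip_b_iff alt_eq_b_iff by auto
    then show "i \<in> block_starts t (flip b)"
      using i N_gt_2M flip_b_neq alt_prefix_length[OF t] by (auto simp: block_starts_def)
  qed
  show "card {i. i < 2 * M \<and> odd i} = card (block_starts t (flip b))"
    using card_odd_less[of "2 * M"] card_block_starts[OF alt_prefix_Str_bb[OF t]] b_bit by simp
qed simp

lemma alt_prefix_final_nth:
  assumes t: "t \<in> alt_prefix (2 * M + 1)" and i: "i < N"
  shows "t ! i = (if i \<le> 2 * M then alt i else b)"
proof (cases "i \<le> 2 * M")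
  case False
  have t_Str_bb: "t \<in> Str_bb" using alt_prefix_Str_bb[OF t] .
  have "t ! (2 * M) = b" using t alt_eq_b_iff by (simp add: alt_prefix_def)
  then have "t ! i = t ! (2 * M)"
    using bit_constant_after_last_block_start[OF Str_bb_lin[OF t_Str_bb], of "2 * M" i]
      alt_prefix_final_block_starts[OF t] Str_bb_last[OF t_Str_bb] Str_bb_length[OF t_Str_bb]
      False i N_gt_2M b_bit by auto
  then show ?thesis using \<open>t ! (2 * M) = b\<close> False by simp
qed (use t in \<open>simp add: alt_prefix_def\<close>)

lemma alt_prefix_final_unique:
  assumes "t \<in> alt_prefix (2 * M + 1)" "t' \<in> alt_prefix (2 * M + 1)"
  shows "t = t'"
proof (rule nth_equalityI)
  show "length t = length t'" using assms by (auto simp: alt_prefix_def Str_bb_length)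
  fix i assume "i < length t"
  then have "i < N" using assms by (auto simp: alt_prefix_def Str_bb_length)
  then show "t ! i = t' ! i"
    using alt_prefix_final_nth[OF assms(1)] alt_prefix_final_nth[OF assms(2)] by simp
qed

end
context pinned_strings
begin

definition Str_bb_bar :: "sym list set" where
  "Str_bb_bar = {s \<in> Str N M. (s ! 0, s ! (N - 1)) \<in> {(b, b), (b, X), (X, b)}}"

definition fill_ends :: "sym list \<Rightarrow> sym list" where
  "fill_ends s = map (\<lambda>i. if (i = 0 \<or> i = N - 1) \<and> s ! i = X then b else s ! i) [0..<length s]"

lemma length_fill_ends[simp]: "length (fill_ends s) = length s"
  by (simp add: fill_ends_def)

lemma nth_fill_ends:
  "i < length s \<Longrightarrow> fill_ends s ! i = (if (i = 0 \<or> i = N - 1) \<and> s ! i = X then b else s ! i)"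
  by (simp add: fill_ends_def)

lemma Str_bb_subset_bar: "Str_bb \<subseteq> Str_bb_bar"
  unfolding Str_bb_def Str_bb_bar_def by auto

lemma Str_bb_bar_length: "s \<in> Str_bb_bar \<Longrightarrow> length s = N"
  and Str_bb_bar_X_blocks_ok: "s \<in> Str_bb_bar \<Longrightarrow> X_blocks_ok s"
  unfolding Str_bb_bar_def Str_def by auto

lemma Str_bb_bar_num_blocks: "s \<in> Str_bb_bar \<Longrightarrow> c \<noteq> X \<Longrightarrow> num_blocks s c = M"
  unfolding Str_bb_bar_def Str_def by (cases c) auto

lemma fill_ends_first: "s \<in> Str_bb_bar \<Longrightarrow> fill_ends s ! 0 = b"
  and fill_ends_last: "s \<in> Str_bb_bar \<Longrightarrow> fill_ends s ! (N - 1) = b"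
  using nth_fill_ends[of 0 s] nth_fill_ends[of "N - 1" s] Str_bb_bar_length[of s] N_gt_2
  by (auto simp: Str_bb_bar_def)

lemma str_le_fill_ends: "s \<in> Str_bb_bar \<Longrightarrow> str_le (fill_ends s) s"
  unfolding str_le_def using nth_fill_ends b_bit by auto

lemma fill_ends_mono:
  assumes s: "s \<in> Str_bb_bar" and s': "s' \<in> Str_bb_bar" and le: "str_le s' s"
  shows "str_le (fill_ends s') (fill_ends s)"
  unfolding str_le_def
proof (intro conjI allI impI)
  show "length (fill_ends s') = length (fill_ends s)" using le by (simp add: str_le_def)
  fix i assume "i < length (fill_ends s)"
  then have i: "i < length s" "i < length s'" using le by (auto simp: str_le_def)
  have e0: "s ! 0 = b \<or> s ! 0 = X" "s' ! 0 = b \<or> s' ! 0 = X" "s ! (N - 1) = b \<or> s ! (N - 1) = X"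
    "s' ! (N - 1) = b \<or> s' ! (N - 1) = X" using s s' unfolding Str_bb_bar_def by auto
  show "fill_ends s ! i = fill_ends s' ! i \<or> fill_ends s ! i = X \<and> fill_ends s' ! i \<noteq> X"
  proof (cases "i = 0 \<or> i = N - 1")
    case True
    then have "fill_ends s ! i = b" "fill_ends s' ! i = b"
      using nth_fill_ends[OF i(1)] nth_fill_ends[OF i(2)] e0 by auto
    then show ?thesis by simp
  next
    case False
    then show ?thesis using nth_fill_ends[OF i(1)] nth_fill_ends[OF i(2)] le i unfolding str_le_def
      by auto
  qed
qed

context
  fixes s :: "sym list"
  assumes s: "s \<in> Str_bb_bar" and s0: "s ! 0 = b" and sN: "s ! (N - 1) = X"
begin

lemma nth_fill_ends_last_X: "i < N - 1 \<Longrightarrow> fill_ends s ! i = s ! i"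
  using nth_fill_ends[of i s] Str_bb_bar_length[OF s] s0 by auto

lemma lin_X_blocks_ok_fill_ends_last_X: "lin_X_blocks_ok (fill_ends s)"
  unfolding lin_X_blocks_ok_def
proof (intro allI impI)
  fix i j assume a: "i + 1 < j \<and> j < length (fill_ends s) \<and> (fill_ends s) ! i \<noteq> X
    \<and> (fill_ends s) ! j \<noteq> X \<and> (\<forall>l. i < l \<and> l < j \<longrightarrow> (fill_ends s) ! l = X)"
  then have ij: "i + 1 < j" "j < N" and btw: "\<And>l. i < l \<Longrightarrow> l < j \<Longrightarrow> (fill_ends s) ! l = X"
    using Str_bb_bar_length[OF s] by auto
  have "i < N - 1" using ij by arith
  then have bi: "s ! i \<noteq> X" using nth_fill_ends_last_X[of i] a by auto
  show "(fill_ends s) ! i \<noteq> (fill_ends s) ! j"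
  proof (cases "j = N - 1")
    case True
    have "s ! i \<noteq> s ! 0"
    proof (rule X_blocks_ok_wrap_first[OF Str_bb_bar_X_blocks_ok[OF s]])
      show "i + 1 < length s" using ij Str_bb_bar_length[OF s] by simp
      show "s ! i \<noteq> X" by fact
      show "s ! 0 \<noteq> X" using s0 sN b_bit by simp
      fix l assume "i < l" "l < length s"
      then show "s ! l = X"
      proof (cases "l = N - 1")
        case True then show ?thesis using s0 sN by simp
      next
        case False then show ?thesis
          using btw[of l] nth_fill_ends_last_X[of l] \<open>i < l\<close> \<open>l < length s\<close> Str_bb_bar_length[OF s]
            \<open>j = N - 1\<close> by auto
      qed
    qed
    then show ?thesis using True nth_fill_ends_last_X[of i] ij fill_ends_last[OF s] s0 sN by simp
  next
    case False
    have "s ! i \<noteq> s ! j"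
      by (rule X_blocks_ok_imp_lin[OF Str_bb_bar_X_blocks_ok[OF s]]) (use ij bi a
        nth_fill_ends_last_X False Str_bb_bar_length[OF s] btw in auto)
    then show ?thesis using nth_fill_ends_last_X[of i] nth_fill_ends_last_X[of j] ij False by simp
  qed
qed

lemma block_starts_fill_ends_last_X:
  assumes "c \<noteq> X" "c \<noteq> b"
  shows "cyclic_block_starts s c = block_starts (fill_ends s) c"
proof -
  have "i \<in> cyclic_block_starts s c \<longleftrightarrow> i \<in> block_starts (fill_ends s) c" for i
  proof (cases "0 < i \<and> i < N - 1")
    case True
    then have "(fill_ends s) ! i = s ! i" "(fill_ends s) ! (i - 1) = s ! (i - 1)"
      using nth_fill_ends_last_X by auto
    then show ?thesis unfolding cyclic_block_starts_def block_starts_def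
      using True Str_bb_bar_length[OF s] by (auto simp: mod_pred)
  next
    case False
    then consider "i = 0" | "i = N - 1" | "N \<le> i" by linarith
    then show ?thesis
    proof cases
      case 1 then show ?thesis unfolding cyclic_block_starts_def block_starts_def
        using s0 sN assms by auto
    next
      case 2 then show ?thesis unfolding cyclic_block_starts_def block_starts_def
        using \<open>s ! (N - 1) = X\<close> fill_ends_last[OF s] assms by auto
    next
      case 3 then show ?thesis unfolding cyclic_block_starts_def block_starts_def
        using Str_bb_bar_length[OF s] by auto
    qed
  qed
  then show ?thesis by blast
qed

lemma before_last_X_neq_b: "s ! (N - 2) \<noteq> b"
proof
  assume h: "s ! (N - 2) = b"
  have "s ! (N - 2) \<noteq> s ! 0"
  proof (rule X_blocks_ok_wrap_first[OF Str_bb_bar_X_blocks_ok[OF s]])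
    show "N - 2 + 1 < length s" using Str_bb_bar_length[OF s] N_gt_2 by simp
    show "s ! (N - 2) \<noteq> X" using h b_bit by simp
    show "s ! 0 \<noteq> X" using s0 sN b_bit by simp
    fix l assume "N - 2 < l" "l < length s"
    then have "l = N - 1" using Str_bb_bar_length[OF s] by simp
    then show "s ! l = X" using s0 sN by simp
  qed
  then show False using h s0 sN by simp
qed

lemma block_starts_fill_ends_last_X_b:
  "block_starts (fill_ends s) b = insert (N - 1) (cyclic_block_starts s b - {0})"
proof -
  have "i \<in> block_starts (fill_ends s) b \<longleftrightarrow> i \<in> insert (N - 1) (cyclic_block_starts s b - {0})" for i
  proof (cases "0 < i \<and> i < N - 1")
    case True
    then have "(fill_ends s) ! i = s ! i" "(fill_ends s) ! (i - 1) = s ! (i - 1)"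
      using nth_fill_ends_last_X by auto
    then show ?thesis unfolding cyclic_block_starts_def block_starts_def
      using True Str_bb_bar_length[OF s] by (auto simp: mod_pred)
  next
    case False
    then consider "i = 0" | "i = N - 1" | "N \<le> i" by linarith
    then show ?thesis
    proof cases
      case 1 then show ?thesis unfolding cyclic_block_starts_def block_starts_def
        using N_gt_2 by auto
    next
      case 3 then show ?thesis unfolding cyclic_block_starts_def block_starts_def
        using Str_bb_bar_length[OF s] N_gt_2 by auto
    next
      case 4: 2
      have "N - 1 - 1 = N - 2" by simp
      then have "(fill_ends s) ! (N - 1 - 1) = s ! (N - 2)"
        using nth_fill_ends_last_X[of "N - 2"] N_gt_2 by simp
      then show ?thesis unfolding block_starts_def
        using 4 fill_ends_last[OF s] before_last_X_neq_b N_gt_2 Str_bb_bar_length[OF s] by auto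
    qed
  qed
  then show ?thesis by blast
qed

lemma fill_ends_last_X_in_Str_bb: "fill_ends s \<in> Str_bb"
proof -
  have z: "0 \<in> cyclic_block_starts s b" unfolding cyclic_block_starts_def
    using s0 sN Str_bb_bar_length[OF s] N_gt_2 b_bit by auto
  have nz: "N - 1 \<notin> cyclic_block_starts s b" unfolding cyclic_block_starts_def
    using s0 sN b_bit by auto
  have card_M: "card (block_starts (fill_ends s) c) = M" if "c \<noteq> X" for c
  proof -
    have ne: "\<exists>i<length s. s ! i \<noteq> c"
      using s0 sN Str_bb_bar_length[OF s] N_gt_2 that by (intro exI[of _ "N - 1"]) auto
    have m: "card (cyclic_block_starts s c) = M"
      using num_blocks_eq_card[OF ne] Str_bb_bar_num_blocks[OF s that] by simp
    show ?thesis
    proof (cases "c = b")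
      case True
      have fc: "finite (cyclic_block_starts s b)" unfolding cyclic_block_starts_def by auto
      have "card (insert (N - 1) (cyclic_block_starts s b - {0})) 
        = Suc (card (cyclic_block_starts s b - {0}))"
        using nz fc by (intro card_insert_disjoint) auto
      also have "\<dots> = Suc (card (cyclic_block_starts s b) - 1)"
        using z fc by (simp add: card_Diff_singleton)
      also have "\<dots> = card (cyclic_block_starts s b)"
        using z fc card_gt_0_iff[of "cyclic_block_starts s b"] by auto
      finally show ?thesis using block_starts_fill_ends_last_X_b m True by simp
    next
      case False
      then show ?thesis using block_starts_fill_ends_last_X[OF that False, symmetric] m by simp
    qed
  qed
  show ?thesis unfolding Str_bb_iff
    using Str_bb_bar_length[OF s] fill_ends_first[OF s] fill_ends_last[OF s]
      lin_X_blocks_ok_fill_ends_last_X card_M by auto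
qed

end

context
  fixes s :: "sym list"
  assumes s: "s \<in> Str_bb_bar" and s0: "s ! 0 = X" and sN: "s ! (N - 1) = b"
begin

lemma nth_fill_ends_first_X: "0 < i \<Longrightarrow> i < N \<Longrightarrow> fill_ends s ! i = s ! i"
  using nth_fill_ends[of i s] Str_bb_bar_length[OF s] sN by auto

lemma lin_X_blocks_ok_fill_ends_first_X: "lin_X_blocks_ok (fill_ends s)"
  unfolding lin_X_blocks_ok_def
proof (intro allI impI)
  fix i j assume a: "i + 1 < j \<and> j < length (fill_ends s) \<and> (fill_ends s) ! i \<noteq> X
    \<and> (fill_ends s) ! j \<noteq> X \<and> (\<forall>l. i < l \<and> l < j \<longrightarrow> (fill_ends s) ! l = X)"
  then have ij: "i + 1 < j" "j < N" and bj: "s ! j \<noteq> X"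
    and btw: "\<And>l. i < l \<Longrightarrow> l < j \<Longrightarrow> (fill_ends s) ! l = X"
    using nth_fill_ends_first_X[of j] Str_bb_bar_length[OF s] by auto
  show "(fill_ends s) ! i \<noteq> (fill_ends s) ! j"
  proof (cases "i = 0")
    case True
    have "s ! (length s - 1) \<noteq> s ! j"
    proof (rule X_blocks_ok_wrap_last[OF Str_bb_bar_X_blocks_ok[OF s]])
      show "0 < j" "j < length s" using ij Str_bb_bar_length[OF s] by auto
      show "s ! (length s - 1) \<noteq> X" using s0 sN Str_bb_bar_length[OF s] b_bit by simp
      show "s ! j \<noteq> X" by fact
      fix l assume "l < j"
      then show "s ! l = X"
      proof (cases "l = 0")
        case True then show ?thesis using s0 sN by simp
      next
        case False then show ?thesis
          using btw[of l] nth_fill_ends_first_X[of l] \<open>l < j\<close> ij \<open>i = 0\<close> by auto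
      qed
    qed
    then show ?thesis using True nth_fill_ends_first_X[of j] ij fill_ends_first[OF s] s0 sN
      Str_bb_bar_length[OF s] by simp
  next
    case False
    have "s ! i \<noteq> s ! j"
      by (rule X_blocks_ok_imp_lin[OF Str_bb_bar_X_blocks_ok[OF s]]) (use ij a nth_fill_ends_first_X
        False Str_bb_bar_length[OF s] btw in auto)
    then show ?thesis using nth_fill_ends_first_X[of i] nth_fill_ends_first_X[of j] ij False by simp
  qed
qed

lemma second_neq_b:
  assumes "s ! 1 \<noteq> X"
  shows "s ! 1 \<noteq> b"
proof -
  have "s ! (length s - 1) \<noteq> s ! 1"
  proof (rule X_blocks_ok_wrap_last[OF Str_bb_bar_X_blocks_ok[OF s]])
    show "0 < (1::nat)" "1 < length s" using Str_bb_bar_length[OF s] N_gt_2 by auto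
    show "s ! (length s - 1) \<noteq> X" using s0 sN Str_bb_bar_length[OF s] b_bit by simp
    show "s ! 1 \<noteq> X" by fact
    fix l :: nat assume "l < 1" then show "s ! l = X" using s0 sN by simp
  qed
  then show ?thesis using s0 sN Str_bb_bar_length[OF s] by simp
qed

lemma block_starts_fill_ends_first_X:
  assumes "c \<noteq> X"
  shows "cyclic_block_starts s c = block_starts (fill_ends s) c"
proof -
  have "i \<in> cyclic_block_starts s c \<longleftrightarrow> i \<in> block_starts (fill_ends s) c" for i
  proof (cases "1 < i \<and> i < N")
    case True
    then have "(fill_ends s) ! i = s ! i" "(fill_ends s) ! (i - 1) = s ! (i - 1)"
      using nth_fill_ends_first_X by auto
    then show ?thesis unfolding cyclic_block_starts_def block_starts_def
      using True Str_bb_bar_length[OF s] by (auto simp: mod_pred)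
  next
    case False
    then consider "i = 0" | "i = 1" | "N \<le> i" by linarith
    then show ?thesis
    proof cases
      case 1 then show ?thesis unfolding cyclic_block_starts_def block_starts_def
        using s0 sN assms by auto
    next
      case 2
      have "(fill_ends s) ! 1 = s ! 1" using nth_fill_ends_first_X[of 1] N_gt_2 by simp
      then show ?thesis unfolding cyclic_block_starts_def block_starts_def
        using 2 s0 sN assms second_neq_b fill_ends_first[OF s] Str_bb_bar_length[OF s] N_gt_2
          by (auto simp: mod_pred)
    next
      case 3 then show ?thesis unfolding cyclic_block_starts_def block_starts_def
        using Str_bb_bar_length[OF s] by auto
    qed
  qed
  then show ?thesis by blast
qed

lemma fill_ends_first_X_in_Str_bb: "fill_ends s \<in> Str_bb"
proof -
  have card_M: "card (block_starts (fill_ends s) c) = M" if "c \<noteq> X" for c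
  proof -
    have ne: "\<exists>i<length s. s ! i \<noteq> c"
      using s0 sN Str_bb_bar_length[OF s] N_gt_2 that by (intro exI[of _ 0]) auto
    show ?thesis using num_blocks_eq_card[OF ne] Str_bb_bar_num_blocks[OF s that]
      block_starts_fill_ends_first_X[OF that] by simp
  qed
  show ?thesis unfolding Str_bb_iff
    using Str_bb_bar_length[OF s] fill_ends_first[OF s] fill_ends_last[OF s]
      lin_X_blocks_ok_fill_ends_first_X card_M by auto
qed

end

lemma fill_ends_in_Str_bb:
  assumes s: "s \<in> Str_bb_bar"
  shows "fill_ends s \<in> Str_bb"
proof -
  consider "s ! 0 = b" "s ! (N - 1) = b" | "s ! 0 = b" "s ! (N - 1) = X" | "s ! 0 = X"
    "s ! (N - 1) = b"
    using s by (auto simp: Str_bb_bar_def)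
  then show ?thesis
  proof cases
    case 1
    then have "fill_ends s = s"
      using nth_fill_ends Str_bb_bar_length[OF s] by (intro nth_equalityI) auto
    moreover have "s \<in> Str_bb" using s 1 unfolding Str_bb_def Str_bb_bar_def by auto
    ultimately show ?thesis by simp
  qed (use s fill_ends_last_X_in_Str_bb fill_ends_first_X_in_Str_bb in auto)
qed

end

section \<open>Contractibility\<close>

lemma finite_Str: "finite (Str N M)"
proof -
  have "finite {s. set s \<subseteq> {Z0, O1, X} \<and> length s = N}"
    by (rule finite_lists_length_eq) simp
  moreover have "set s \<subseteq> {Z0, O1, X}" for s
    by (auto intro: sym.exhaust)
  then have "Str N M \<subseteq> {s. set s \<subseteq> {Z0, O1, X} \<and> length s = N}"
    by (auto simp: Str_def)
  ultimately show ?thesis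
    using finite_subset by blast
qed

context pinned_strings
begin

primrec close_gaps :: "(sym list \<Rightarrow> sym list) \<Rightarrow> nat \<Rightarrow> sym list \<Rightarrow> sym list" where
  "close_gaps r 0 = r"
| "close_gaps r (Suc k) = close_gap (Suc k) \<circ> close_gaps r k"

context
  fixes P :: "sym list set" and r :: "sym list \<Rightarrow> sym list"
  assumes finite_P: "finite P" and Str_bb_subset_P: "Str_bb \<subseteq> P"
    and r_Str_bb: "\<And>s. s \<in> P \<Longrightarrow> r s \<in> Str_bb"
    and r_le: "\<And>s. s \<in> P \<Longrightarrow> str_le (r s) s"
    and r_mono: "monotone_on P str_le str_le r"
begin

interpretation finite_strict_poset P str_less
  by unfold_locales (use finite_P str_less_irrefl str_less_trans in auto)

lemma le_eq_str_le: "le = str_le"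
  by (auto simp: fun_eq_iff le_def str_le_iff_eq_or_less)

lemma close_gaps_in_alt_prefix_mono:
  "k \<le> 2 * M \<Longrightarrow>
    (\<forall>s\<in>P. close_gaps r k s \<in> alt_prefix (Suc k)) \<and> monotone_on P str_le str_le (close_gaps r k)"
proof (induction k)
  case 0
  show ?case
    using r_Str_bb Str_bb_first r_mono by (simp add: alt_prefix_def alt_def)
next
  case (Suc k)
  have k: "1 \<le> Suc k" "Suc k \<le> 2 * M" using Suc.prems by auto
  have IH: "\<forall>s\<in>P. close_gaps r k s \<in> alt_prefix (Suc k)"
    "monotone_on P str_le str_le (close_gaps r k)"
    using Suc by auto
  have "\<forall>s\<in>P. close_gaps r (Suc k) s \<in> alt_prefix (Suc (Suc k))"
    using close_gap_in_alt_prefix[OF _ k] IH(1) by simp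
  moreover have "monotone_on P str_le str_le (close_gaps r (Suc k))"
    using close_gap_mono[OF _ _ k] IH by (auto simp: monotone_on_def)
  ultimately show ?case ..
qed

lemma pushforward_homotopic_close_gaps:
  assumes "k \<le> 2 * M"
  shows "pushforward_homotopic id (close_gaps r k)"
  using assms
proof (induction k)
  case 0
  have "pushforward_homotopic id r"
    using r_Str_bb Str_bb_subset_P r_mono r_le
    by (intro pushforward_homotopic_if_le) (auto simp: le_eq_str_le monotone_on_def)
  then show ?case by (simp only: close_gaps.simps)
next
  case (Suc k)
  have k: "1 \<le> Suc k" "Suc k \<le> 2 * M" using Suc.prems by auto
  note Hk = close_gaps_in_alt_prefix_mono[of k] and HSk = close_gaps_in_alt_prefix_mono[of "Suc k"]
  note homotopic = pushforward_homotopic_if_le[unfolded le_eq_str_le]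
  let ?E = "erase_gap (Suc k) \<circ> close_gaps r k"
  have E: "?E ` P \<subseteq> P" "monotone_on P str_le str_le ?E"
  proof -
    show "?E ` P \<subseteq> P"
      using Hk Suc.prems erase_gap_in_Str_bb[OF _ k] Str_bb_subset_P by auto
    show "monotone_on P str_le str_le ?E"
    proof (rule monotone_onI)
      fix x y assume "x \<in> P" "y \<in> P" "str_le x y"
      then show "str_le (?E x) (?E y)"
        using Hk Suc.prems erase_gap_mono[OF _ _ k] by (simp add: monotone_on_def)
    qed
  qed
  have "pushforward_homotopic ?E (close_gaps r k)"
  proof (rule homotopic[OF _ _ E])
    show "close_gaps r k ` P \<subseteq> P" using Hk Suc.prems Str_bb_subset_P by (auto simp: alt_prefix_def)
  qed (use Hk Suc.prems str_le_erase_gap[OF _ k] in auto)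
  moreover have "pushforward_homotopic ?E (close_gaps r (Suc k))"
  proof (rule homotopic[OF _ _ E])
    show "close_gaps r (Suc k) ` P \<subseteq> P"
      using HSk Suc.prems Str_bb_subset_P by (auto simp: alt_prefix_def)
  qed (use HSk Hk Suc.prems close_gap_str_le_erase_gap[OF _ k] in auto)
  moreover have "pushforward_homotopic id (close_gaps r k)"
    using Suc.IH Suc.prems by (metis Suc_leD)
  ultimately show ?case
    by (meson homotopic_with_symD homotopic_with_trans)
qed

theorem contractible_realization: "contractible (order_complex_realization P str_less)"
proof (cases "P = {}")
  case True
  then show ?thesis by (simp add: order_complex_realization_def)
next
  case False
  then obtain s0 where "s0 \<in> P" by blast
  then have "close_gaps r (2 * M) s = close_gaps r (2 * M) s0" if "s \<in> P" for s
    using alt_prefix_final_unique close_gaps_in_alt_prefix_mono[of "2 * M"] that by simp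
  then show ?thesis
    using contractible_if_pushforward_homotopic_const pushforward_homotopic_close_gaps by blast
qed

end

end

theorem proposition5p5:
  fixes N M :: nat
  assumes "0 < M" and "2 * M < N"
  shows "contractible (order_complex_realization (Str00 N M) str_less)
       \<and> contractible (order_complex_realization (Str00bar N M) str_less)
       \<and> contractible (order_complex_realization (Str11 N M) str_less)
       \<and> contractible (order_complex_realization (Str11bar N M) str_less)"
proof -
  interpret Z: pinned_strings N M Z0 by unfold_locales (use assms in auto)
  interpret O: pinned_strings N M O1 by unfold_locales (use assms in auto)
  have "Str00 N M = Z.Str_bb" "Str00bar N M = Z.Str_bb_bar"
    "Str11 N M = O.Str_bb" "Str11bar N M = O.Str_bb_bar"
    by (simp_all add: Str00_def Z.Str_bb_def Str00bar_def Z.Str_bb_bar_def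
        Str11_def O.Str_bb_def Str11bar_def O.Str_bb_bar_def)
  moreover have "finite Z.Str_bb" "finite Z.Str_bb_bar" "finite O.Str_bb" "finite O.Str_bb_bar"
    using finite_Str[of N M]
    by (auto simp: Z.Str_bb_def Z.Str_bb_bar_def O.Str_bb_def O.Str_bb_bar_def intro: finite_subset)
  ultimately show ?thesis
    using Z.contractible_realization[of Z.Str_bb id] Z.contractible_realization[of Z.Str_bb_bar Z.fill_ends]
      O.contractible_realization[of O.Str_bb id] O.contractible_realization[of O.Str_bb_bar O.fill_ends]
      Z.Str_bb_subset_bar Z.fill_ends_in_Str_bb Z.str_le_fill_ends Z.fill_ends_mono
      O.Str_bb_subset_bar O.fill_ends_in_Str_bb O.str_le_fill_ends O.fill_ends_mono
    by (simp add: monotone_on_def)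
qed

end
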